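(* Let $\tau>0$, $M\in\mathbb{Z}^+$, and let $a_i,w_i:[0,\tau]\to\mathbb{R}^N$, $b_i:[0,\tau]\to\mathbb{R}$ ($i=1,\dots,M$) be piecewise constant functions. Let $\phi^\tau:\mathbb{R}^N\to\mathbb{R}^N$ be the flow map $\phi^\tau(x_0)=x(\tau)$ of the ODE $\dot x(t)=\sum_{i=1}^M a_i(t)\tanh(w_i(t)\cdot x(t)+b_i(t))$, $t\in[0,\tau]$, $x(0)=x_0$. Let $\Omega\subset\mathbb{R}^N$ be compact and $\varepsilon>0$. Then there exist $L$ and a leaky-ReLU network $\psi\in\mathcal{N}_{N,L}(\sigma_\alpha)$ from $\mathbb{R}^N$ to $\mathbb{R}^N$ of width $N$ and depth $L$ such that $\|\phi^\tau(x_0)-\psi(x_0)\|<\varepsilon$ for all $x_0\in\Omega$.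
   Context: Fix $\alpha\in\mathbb{R}^+\setminus\{1\}$ and let $\sigma_\alpha(x)=x$ for $x>0$ and $\sigma_\alpha(x)=\alpha x$ for $x\le 0$, applied coordinatewise (leaky-ReLU). A leaky-ReLU network of width $N$ and depth $L$ from $\mathbb{R}^{d_x}$ to $\mathbb{R}^{d_y}$ is a map $x\mapsto W_{L+1}\sigma_\alpha(W_L(\cdots\sigma_\alpha(W_1x+b_1)\cdots)+b_L)+b_{L+1}$ with $W_1\in\mathbb{R}^{N\times d_x}$, $W_i\in\mathbb{R}^{N\times N}$ for $2\le i\le L$, $b_i\in\mathbb{R}^N$ for $1\le i\le L$, $W_{L+1}\in\mathbb{R}^{d_y\times N}$, $b_{L+1}\in\mathbb{R}^{d_y}$; $\mathcal{N}_{N,L}(\sigma_\alpha)$ is the set of such networks. Here $d_x=d_y=N$. $\|\cdot\|$ is the Euclidean norm. *)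

theory Defs
  imports "HOL-Analysis.Analysis"
begin

definition leaky_relu :: "real \<Rightarrow> real \<Rightarrow> real" where
  "leaky_relu \<alpha> x = (if x > 0 then x else \<alpha> * x)"

definition leaky_relu_vec :: "real \<Rightarrow> real ^ 'n \<Rightarrow> real ^ 'n" where
  "leaky_relu_vec \<alpha> v = (\<chi> i. leaky_relu \<alpha> (v $ i))"

fun net_eval :: "real \<Rightarrow> ((real ^ 'n ^ 'n) \<times> (real ^ 'n)) list \<Rightarrow> real ^ 'n \<Rightarrow> real ^ 'n" where
  "net_eval \<alpha> [] x = x"
| "net_eval \<alpha> [(W, b)] x = W *v x + b"
| "net_eval \<alpha> ((W, b) # rest) x = net_eval \<alpha> rest (leaky_relu_vec \<alpha> (W *v x + b))"

definition leaky_nets :: "real \<Rightarrow> nat \<Rightarrow> (real ^ 'n \<Rightarrow> real ^ 'n) set" where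
  "leaky_nets \<alpha> L = {\<psi>. \<exists>layers. length layers = L + 1 \<and> \<psi> = net_eval \<alpha> layers}"

definition piecewise_constant_on :: "real \<Rightarrow> (real \<Rightarrow> 'a) \<Rightarrow> bool" where
  "piecewise_constant_on \<tau> f \<longleftrightarrow>
     (\<exists>ts :: real list. length ts \<ge> 2 \<and> sorted_wrt (<) ts \<and> hd ts = 0 \<and> last ts = \<tau> \<and>
        (\<forall>j < length ts - 1. \<exists>c. \<forall>t \<in> {ts ! j <..< ts ! (j + 1)}. f t = c))"

definition tanh_field ::
  "nat \<Rightarrow> (nat \<Rightarrow> real \<Rightarrow> real ^ 'n) \<Rightarrow> (nat \<Rightarrow> real \<Rightarrow> real ^ 'n) \<Rightarrow> (nat \<Rightarrow> real \<Rightarrow> real)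
     \<Rightarrow> real \<Rightarrow> real ^ 'n \<Rightarrow> real ^ 'n" where
  "tanh_field M a w b t x = (\<Sum>i = 1..M. tanh (w i t \<bullet> x + b i t) *\<^sub>R a i t)"

text \<open>x is a (Caratheodory) solution on [0,tau] of x' = F(t,x), x(0) = x0.\<close>
definition is_solution :: "real \<Rightarrow> (real \<Rightarrow> real ^ 'n \<Rightarrow> real ^ 'n) \<Rightarrow> real ^ 'n \<Rightarrow> (real \<Rightarrow> real ^ 'n) \<Rightarrow> bool" where
  "is_solution \<tau> F x0 x \<longleftrightarrow> continuous_on {0..\<tau>} x \<and> x 0 = x0 \<and>
     (\<forall>t \<in> {0..\<tau>}. (\<lambda>s. F s (x s)) integrable_on {0..t} \<and> x t = x0 + integral {0..t} (\<lambda>s. F s (x s)))"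

definition is_flow_map :: "real \<Rightarrow> (real \<Rightarrow> real ^ 'n \<Rightarrow> real ^ 'n) \<Rightarrow> (real ^ 'n \<Rightarrow> real ^ 'n) \<Rightarrow> bool" where
  "is_flow_map \<tau> F \<phi> \<longleftrightarrow> (\<forall>x0. \<exists>x. is_solution \<tau> F x0 x \<and> \<phi> x0 = x \<tau>)"

end

theory Submission
  imports Defs
begin

text \<open>Split \<open>[0, \<tau>]\<close> into \<open>n\<close> steps of length \<open>h\<close>, freeze the coefficients at the midpoint of
  each step and replace the flow over the step by the composition of the \<open>M\<close> ridge maps
  \<open>y \<mapsto> y + h tanh (w\<^sub>i \<bullet> y + b\<^sub>i) a\<^sub>i\<close> (Lie--Trotter splitting). This is \<open>O(h\<^sup>2)\<close>-close to an
  Euler step, so a discrete Gronwall argument bounds the global error by \<open>O(h)\<close>, including the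
  \<open>O(h)\<close> losses on the finitely many steps that contain a jump of the coefficients.

  Along a direction \<open>p\<close> with \<open>w\<^sub>i \<bullet> p = 1\<close>, a ridge map with \<open>h \<bar>w\<^sub>i \<bullet> a\<^sub>i\<bar>\<close> small changes only
  the coordinate \<open>u = w\<^sub>i \<bullet> y\<close>, monotonically and with slopes between \<open>1\<close> and \<open>\<alpha>\<close> or \<open>1/\<alpha>\<close>.
  Such a map is a uniform limit of chains of ramps with slopes \<open>1\<close> and \<open>\<alpha>\<^sup>\<plusminus>\<^sup>1\<close>; each ramp is
  a composition of two kinks, and a kink is \<open>\<sigma>\<^sub>\<alpha>\<close> (or \<open>z \<mapsto> -\<sigma>\<^sub>\<alpha>(-z)/\<alpha>\<close>) in suitable affine
  coordinates, hence agrees with a width-\<open>N\<close> network on any compact set. The case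
  \<open>w\<^sub>i \<bullet> a\<^sub>i = 0\<close> is a limit of two such steps. Uniform approximability on compact sets survives
  composition, so the splitting scheme, and with it the flow map, is approximated by networks.\<close>

section \<open>Leaky-ReLU networks and the maps they realise\<close>

fun hidden_layers :: "real \<Rightarrow> ((real ^ 'n ^ 'n) \<times> (real ^ 'n)) list \<Rightarrow> real ^ 'n \<Rightarrow> real ^ 'n" where
  "hidden_layers \<alpha> [] x = x"
| "hidden_layers \<alpha> ((W, b) # ls) x = hidden_layers \<alpha> ls (leaky_relu_vec \<alpha> (W *v x + b))"

lemma net_eval_append_output: "net_eval \<alpha> (ls @ [(W, b)]) x = W *v hidden_layers \<alpha> ls x + b"
proof (induction ls arbitrary: x)
  case Nil
  then show ?case by simp
next
  case (Cons l ls)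
  obtain V c where l: "l = (V, c)" by force
  obtain l' ls' where "ls @ [(W, b)] = l' # ls'" by (cases "ls @ [(W, b)]") auto
  then have "net_eval \<alpha> ((V, c) # ls @ [(W, b)]) x
      = net_eval \<alpha> (ls @ [(W, b)]) (leaky_relu_vec \<alpha> (V *v x + c))"
    by (metis net_eval.simps(3))
  then show ?case using Cons l by simp
qed

lemma hidden_layers_append: "hidden_layers \<alpha> (ls @ ls') x = hidden_layers \<alpha> ls' (hidden_layers \<alpha> ls x)"
  by (induction \<alpha> ls x rule: hidden_layers.induct) auto

lemma hidden_layers_Cons_affine:
  "hidden_layers \<alpha> ((V, c) # ls) (W *v x + b) = hidden_layers \<alpha> ((V ** W, V *v b + c) # ls) x"
  by (simp add: matrix_vector_mul_assoc matrix_vector_right_distrib add.assoc)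

lemma leaky_relu_eq_min: "leaky_relu \<alpha> x = x + (\<alpha> - 1) * min x 0"
  by (simp add: leaky_relu_def min_def algebra_simps)

lemma continuous_on_leaky_relu_vec: "continuous_on S (leaky_relu_vec \<alpha>)"
  unfolding leaky_relu_vec_def leaky_relu_eq_min by (intro continuous_intros)

lemma leaky_relu_vec_positive: "(\<And>i. v $ i > 0) \<Longrightarrow> leaky_relu_vec \<alpha> v = v"
  by (simp add: leaky_relu_vec_def leaky_relu_def vec_eq_iff)

definition realizable :: "real \<Rightarrow> (real ^ 'n \<Rightarrow> real ^ 'n) set" where
  "realizable \<alpha> = {G. continuous_on UNIV G \<and> (\<forall>K. compact K \<longrightarrow>
      (\<exists>ls W b. ls \<noteq> [] \<and> (\<forall>x\<in>K. W *v hidden_layers \<alpha> ls x + b = G x)))}"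

lemma realizable_ex_net:
  assumes "G \<in> realizable \<alpha>" "compact K"
  shows "\<exists>L\<ge>1. \<exists>\<psi> \<in> leaky_nets \<alpha> L. \<forall>x\<in>K. \<psi> x = G x"
proof -
  obtain ls W b where net: "ls \<noteq> []" "\<forall>x\<in>K. W *v hidden_layers \<alpha> ls x + b = G x"
    using assms unfolding realizable_def by blast
  show ?thesis
  proof (intro exI conjI bexI ballI)
    show "1 \<le> length ls" using net by (cases ls) auto
    show "net_eval \<alpha> (ls @ [(W, b)]) \<in> leaky_nets \<alpha> (length ls)"
      unfolding leaky_nets_def by (intro CollectI exI[of _ "ls @ [(W, b)]"]) simp
    show "net_eval \<alpha> (ls @ [(W, b)]) x = G x" if "x \<in> K" for x
      using that net net_eval_append_output by metis
  qed
qed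

lemma realizable_localI:
  fixes f :: "real ^ 'n \<Rightarrow> real ^ 'n"
  assumes "continuous_on UNIV f" "\<And>K. compact K \<Longrightarrow> \<exists>G\<in>realizable \<alpha>. \<forall>x\<in>K. G x = f x"
  shows "f \<in> realizable \<alpha>"
  unfolding realizable_def
proof (intro CollectI conjI allI impI)
  show "continuous_on UNIV f" by fact
  fix K :: "(real ^ 'n) set"
  assume K: "compact K"
  obtain G where G: "G \<in> realizable \<alpha>" "\<forall>x\<in>K. G x = f x" using assms(2)[OF K] by blast
  then obtain ls W b where "ls \<noteq> []" "\<forall>x\<in>K. W *v hidden_layers \<alpha> ls x + b = G x"
    using K unfolding realizable_def by blast
  then show "\<exists>ls W b. ls \<noteq> [] \<and> (\<forall>x\<in>K. W *v hidden_layers \<alpha> ls x + b = f x)"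
    using G by auto
qed

text \<open>The output layer of the first network is absorbed into the first layer of the second.\<close>
lemma realizable_comp:
  fixes F G :: "real ^ 'n \<Rightarrow> real ^ 'n"
  assumes F: "F \<in> realizable \<alpha>" and G: "G \<in> realizable \<alpha>"
  shows "(\<lambda>x. G (F x)) \<in> realizable \<alpha>"
  unfolding realizable_def
proof (intro CollectI conjI allI impI)
  have cF: "continuous_on UNIV F" and cG: "continuous_on UNIV G"
    using F G by (auto simp: realizable_def)
  then show "continuous_on UNIV (\<lambda>x. G (F x))"
    by (metis continuous_on_compose2 subset_UNIV)
  fix K :: "(real ^ 'n) set"
  assume K: "compact K"
  obtain ls1 W1 b1 where net1: "ls1 \<noteq> []" "\<forall>x\<in>K. W1 *v hidden_layers \<alpha> ls1 x + b1 = F x"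
    using F K unfolding realizable_def by blast
  have "compact (F ` K)"
    using cF K by (metis compact_continuous_image continuous_on_subset subset_UNIV)
  then obtain ls2 W2 b2 where net2: "ls2 \<noteq> []" "\<forall>x\<in>F ` K. W2 *v hidden_layers \<alpha> ls2 x + b2 = G x"
    using G unfolding realizable_def by blast
  obtain V c ls where ls2: "ls2 = (V, c) # ls" using net2(1) by (metis list.exhaust prod.exhaust)
  let ?ls = "ls1 @ ((V ** W1, V *v b1 + c) # ls)"
  show "\<exists>ls W b. ls \<noteq> [] \<and> (\<forall>x\<in>K. W *v hidden_layers \<alpha> ls x + b = G (F x))"
  proof (intro exI conjI ballI)
    show "?ls \<noteq> []" by simp
    fix x
    assume x: "x \<in> K"
    have "W2 *v hidden_layers \<alpha> ?ls x + b2 = W2 *v hidden_layers \<alpha> ls2 (W1 *v hidden_layers \<alpha> ls1 x + b1) + b2"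
      by (simp add: hidden_layers_append ls2 hidden_layers_Cons_affine del: hidden_layers.simps)
    also have "\<dots> = G (F x)" using net1 net2 x by auto
    finally show "W2 *v hidden_layers \<alpha> ?ls x + b2 = G (F x)" .
  qed
qed

text \<open>On a compact set a large bias keeps every pre-activation positive, so one hidden
  layer acts as the identity.\<close>
lemma realizable_affine:
  fixes f :: "real ^ 'n \<Rightarrow> real ^ 'n"
  assumes lin: "linear f"
  shows "(\<lambda>x. f x + c) \<in> realizable \<alpha>"
  unfolding realizable_def
proof (intro CollectI conjI allI impI)
  have cont: "continuous_on S (\<lambda>x. f x + c)" for S
    using lin by (intro continuous_intros linear_continuous_on linear_conv_bounded_linear[THEN iffD1])
  then show "continuous_on UNIV (\<lambda>x. f x + c)" .
  fix K :: "(real ^ 'n) set"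
  assume K: "compact K"
  then obtain B where B: "\<forall>y\<in>(\<lambda>x. f x + c) ` K. norm y \<le> B"
    using cont compact_continuous_image compact_imp_bounded bounded_iff by metis
  define d :: "real ^ 'n" where "d = (\<chi> i. B + 1)"
  have f: "f x = matrix f *v x" for x
    using matrix_works[OF lin[folded linear_matrix_vector_mul_eq]] by simp
  show "\<exists>ls W b. ls \<noteq> [] \<and> (\<forall>x\<in>K. W *v hidden_layers \<alpha> ls x + b = f x + c)"
  proof (intro exI conjI ballI)
    show "[(matrix f, c + d)] \<noteq> []" by simp
    fix x
    assume x: "x \<in> K"
    have "(matrix f *v x + (c + d)) $ i > 0" for i
    proof -
      have "\<bar>(f x + c) $ i\<bar> \<le> B"
        using B x component_le_norm_cart order_trans by blast
      then show ?thesis by (simp add: d_def f[symmetric])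
    qed
    then show "mat 1 *v hidden_layers \<alpha> [(matrix f, c + d)] x + (- d) = f x + c"
      using leaky_relu_vec_positive[of "matrix f *v x + (c + d)"] f by simp
  qed
qed

lemma realizable_linear: "linear (f :: real ^ 'n \<Rightarrow> real ^ 'n) \<Longrightarrow> f \<in> realizable \<alpha>"
  using realizable_affine[of f 0] by simp

lemma realizable_id: "(\<lambda>x. x) \<in> realizable \<alpha>"
  by (rule realizable_linear) (simp add: linear_id[unfolded id_def])

lemma realizable_leaky_relu_vec: "leaky_relu_vec \<alpha> \<in> realizable \<alpha>"
  unfolding realizable_def
proof (intro CollectI conjI allI impI)
  show "continuous_on UNIV (leaky_relu_vec \<alpha>)" by (rule continuous_on_leaky_relu_vec)
  show "\<exists>ls W b. ls \<noteq> [] \<and> (\<forall>x\<in>K. W *v hidden_layers \<alpha> ls x + b = leaky_relu_vec \<alpha> x)" for K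
    by (intro exI[of _ "[(mat 1, 0)]"] exI[of _ "mat 1"] exI[of _ 0]) simp
qed

definition min_zero_vec :: "real ^ 'n \<Rightarrow> real ^ 'n" where
  "min_zero_vec z = (\<chi> j. min (z $ j) 0)"

text \<open>For \<open>\<kappa> = 1/\<alpha> - 1\<close> this is \<open>z \<mapsto> -\<sigma>\<^sub>\<alpha>(-z)/\<alpha>\<close>.\<close>
lemma realizable_min_zero_kink:
  assumes "\<alpha> > 0" "\<kappa> = \<alpha> - 1 \<or> \<kappa> = 1/\<alpha> - 1"
  shows "(\<lambda>z::real ^ 'n. z + \<kappa> *\<^sub>R min_zero_vec z) \<in> realizable \<alpha>"
  using assms(2)
proof
  assume "\<kappa> = \<alpha> - 1"
  then have "(\<lambda>z::real ^ 'n. z + \<kappa> *\<^sub>R min_zero_vec z) = leaky_relu_vec \<alpha>"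
    by (auto simp: leaky_relu_vec_def leaky_relu_eq_min min_zero_vec_def vec_eq_iff)
  then show ?thesis using realizable_leaky_relu_vec by metis
next
  assume \<kappa>: "\<kappa> = 1/\<alpha> - 1"
  have "(\<lambda>z::real ^ 'n. z + \<kappa> *\<^sub>R min_zero_vec z) = (\<lambda>z. (- (1/\<alpha>)) *\<^sub>R leaky_relu_vec \<alpha> (- z))"
    using assms(1) by (auto simp: \<kappa> leaky_relu_vec_def leaky_relu_def min_zero_vec_def vec_eq_iff field_simps)
  moreover have "(\<lambda>z::real ^ 'n. (- (1/\<alpha>)) *\<^sub>R leaky_relu_vec \<alpha> (- z)) \<in> realizable \<alpha>"
    by (intro realizable_comp[OF realizable_comp[OF realizable_linear realizable_leaky_relu_vec] realizable_linear])
      (auto intro: linear_compose_neg linear_id linear_scaleR simp: linear_uminus)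
  ultimately show ?thesis by metis
qed


section \<open>Piecewise linear maps along a direction\<close>

text \<open>For \<open>l \<bullet> p = 1\<close> this replaces the coordinate \<open>u = l \<bullet> y\<close> by \<open>q u\<close>, moving along \<open>p\<close>.\<close>
definition along :: "real ^ 'n \<Rightarrow> real ^ 'n \<Rightarrow> (real \<Rightarrow> real) \<Rightarrow> real ^ 'n \<Rightarrow> real ^ 'n" where
  "along l p q y = y + (q (l \<bullet> y) - l \<bullet> y) *\<^sub>R p"

definition kink :: "real \<Rightarrow> real \<Rightarrow> real \<Rightarrow> real" where
  "kink t \<kappa> u = u + \<kappa> * min (u - t) 0"

lemma inner_along: "l \<bullet> p = 1 \<Longrightarrow> l \<bullet> along l p q y = q (l \<bullet> y)"
  by (simp add: along_def inner_add_right)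

lemma along_along: "l \<bullet> p = 1 \<Longrightarrow> along l p q2 (along l p q1 y) = along l p (\<lambda>u. q2 (q1 u)) y"
  using inner_along[of l p q1 y] by (simp add: along_def algebra_simps)

lemma adapted_coordinates:
  fixes l p :: "real ^ 'n"
  assumes lp: "l \<bullet> p = 1"
  obtains Q Qi :: "real ^ 'n \<Rightarrow> real ^ 'n" and i
  where "linear Q" "linear Qi" "\<And>y. Qi (Q y) = y" "Q p = axis i 1" "\<And>y. Q y $ i = l \<bullet> y"
proof -
  have "l \<noteq> 0" using lp by auto
  then obtain i where li: "l $ i \<noteq> 0" by (auto simp: vec_eq_iff)
  define Q :: "real ^ 'n \<Rightarrow> real ^ 'n"
    where "Q y = (\<chi> j. if j = i then l \<bullet> y else y $ j - p $ j * (l \<bullet> y))" for y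
  have linQ: "linear Q"
    by (rule linearI) (auto simp: Q_def vec_eq_iff inner_add_right algebra_simps)
  have "inj Q"
    unfolding linear_injective_0[OF linQ]
  proof (intro allI impI)
    fix y
    assume Qy: "Q y = 0"
    then have ly: "l \<bullet> y = 0" by (auto simp: Q_def vec_eq_iff dest: spec[of _ i])
    have yj: "y $ j = 0" if "j \<noteq> i" for j
      using Qy that ly by (auto simp: Q_def vec_eq_iff dest: spec[of _ j])
    have "l \<bullet> y = (\<Sum>j\<in>UNIV. if j = i then l $ i * y $ i else 0)"
      unfolding inner_vec_def by (intro sum.cong) (auto simp: yj)
    then have "y $ i = 0" using ly li by simp
    then show "y = 0" using yj by (metis vec_eq_iff zero_index)
  qed
  then obtain Qi where linQi: "linear Qi" and "Qi \<circ> Q = id"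
    using linear_injective_left_inverse[OF linQ] by blast
  then have "Qi (Q y) = y" for y by (simp add: pointfree_idE)
  moreover have "Q p = axis i 1" using lp by (auto simp: Q_def vec_eq_iff axis_def)
  moreover have "Q y $ i = l \<bullet> y" for y by (simp add: Q_def)
  ultimately show thesis by (rule that[OF linQ linQi])
qed

text \<open>In coordinates adapted to \<open>l\<close> and \<open>p\<close>, shifted so that on the given compact set only the
  coordinate \<open>l \<bullet> y - t\<close> can become negative, the kink becomes the
  coordinatewise kink \<open>z + \<kappa> *\<^sub>R min_zero_vec z\<close>.\<close>
lemma realizable_along_kink:
  fixes l p :: "real ^ 'n"
  assumes lp: "l \<bullet> p = 1" and "\<alpha> > 0" and "\<kappa> = \<alpha> - 1 \<or> \<kappa> = 1/\<alpha> - 1"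
  shows "along l p (kink t \<kappa>) \<in> realizable \<alpha>"
proof (rule realizable_localI)
  show "continuous_on UNIV (along l p (kink t \<kappa>))"
    unfolding along_def kink_def by (intro continuous_intros)
  obtain Q Qi :: "real ^ 'n \<Rightarrow> real ^ 'n" and i
    where linQ: "linear Q" and linQi: "linear Qi" and QiQ: "\<And>y. Qi (Q y) = y"
      and Qp: "Q p = axis i 1" and Qi: "\<And>y. Q y $ i = l \<bullet> y"
    using adapted_coordinates[OF lp] by metis
  fix K :: "(real ^ 'n) set"
  assume "compact K"
  then have "compact (Q ` K)"
    using linQ by (intro compact_continuous_image linear_continuous_on linear_conv_bounded_linear[THEN iffD1])
  then obtain Bd where Bd: "\<forall>z\<in>Q ` K. norm z \<le> Bd" using compact_imp_bounded bounded_iff by metis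
  define d :: "real ^ 'n" where "d = (\<chi> j. if j = i then - t else Bd + 1)"
  define G where "G y = Qi ((\<lambda>z. z + \<kappa> *\<^sub>R min_zero_vec z) (Q y + d)) + (- Qi d)" for y
  show "\<exists>G\<in>realizable \<alpha>. \<forall>x\<in>K. G x = along l p (kink t \<kappa>) x"
  proof (intro bexI ballI)
    show "G \<in> realizable \<alpha>" unfolding G_def
      by (intro realizable_comp[OF realizable_comp[OF realizable_affine realizable_min_zero_kink]
            realizable_affine] linQ linQi assms)
    fix y
    assume y: "y \<in> K"
    have "min_zero_vec (Q y + d) $ j = (min (l \<bullet> y - t) 0 *\<^sub>R axis i 1) $ j" for j
    proof (cases "j = i")
      case True
      then show ?thesis by (simp add: min_zero_vec_def d_def Qi axis_def)
    next
      case False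
      have "\<bar>Q y $ j\<bar> \<le> Bd"
        using Bd y component_le_norm_cart order_trans by blast
      then show ?thesis using False by (simp add: min_zero_vec_def d_def axis_def)
    qed
    then have "min_zero_vec (Q y + d) = min (l \<bullet> y - t) 0 *\<^sub>R axis i 1"
      by (simp add: vec_eq_iff)
    then have "G y = Qi (Q y + d + \<kappa> *\<^sub>R (min (l \<bullet> y - t) 0 *\<^sub>R Q p)) - Qi d"
      by (simp add: G_def Qp)
    also have "\<dots> = Qi (Q y) + (\<kappa> * min (l \<bullet> y - t) 0) *\<^sub>R Qi (Q p)"
      by (simp add: linear_add[OF linQi] linear_scale[OF linQi])
    also have "\<dots> = along l p (kink t \<kappa>) y"
      by (simp add: QiQ along_def kink_def)
    finally show "G y = along l p (kink t \<kappa>) y" .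
  qed
qed

text \<open>Slope \<open>\<rho>\<close> on \<open>[u0, v0]\<close> and slope 1 elsewhere, normalised to be the identity above \<open>v0\<close>.\<close>
definition ramp :: "real \<Rightarrow> real \<Rightarrow> real \<Rightarrow> real \<Rightarrow> real" where
  "ramp \<rho> u0 v0 u = u + (\<rho> - 1) * (min (max u u0) v0 - v0)"

lemma ramp_eq_kink_kink:
  assumes "\<rho> > 0" and "u0 \<le> v0"
  shows "ramp \<rho> u0 v0 u = kink (v0 + \<rho> * (u0 - v0)) (1/\<rho> - 1) (kink v0 (\<rho> - 1) u)"
proof -
  define t where "t = v0 + \<rho> * (u0 - v0)"
  define k where "k = u + (\<rho> - 1) * (u - v0)"
  have kt: "k - t = \<rho> * (u - u0)" by (simp add: k_def t_def algebra_simps)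
  consider "v0 \<le> u" | "u0 \<le> u" "u \<le> v0" | "u \<le> u0" by linarith
  then show ?thesis
  proof cases
    case 1
    moreover have "\<rho> * (u0 - v0) \<le> 0" using assms by (simp add: mult_nonneg_nonpos)
    ultimately show ?thesis using assms by (simp add: t_def ramp_def kink_def min_absorb2)
  next
    case 2
    then have "kink v0 (\<rho> - 1) u = k" "0 \<le> k - t"
      using assms unfolding kt by (simp_all add: kink_def min_absorb1 k_def)
    then show ?thesis using 2 by (simp add: t_def[symmetric] ramp_def kink_def min_absorb2 k_def)
  next
    case 3
    then have "kink v0 (\<rho> - 1) u = k" "k - t \<le> 0"
      using assms unfolding kt by (simp_all add: kink_def min_absorb1 k_def mult_nonneg_nonpos)
    moreover have "k + (1/\<rho> - 1) * (\<rho> * (u - u0)) = u + (\<rho> - 1) * (u0 - v0)"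
      using assms by (simp add: k_def field_simps)
    ultimately show ?thesis
      using 3 assms by (simp add: t_def[symmetric] ramp_def kink_def min_absorb1 kt)
  qed
qed

lemma realizable_along_ramp:
  fixes l p :: "real ^ 'n"
  assumes lp: "l \<bullet> p = 1" and \<alpha>: "\<alpha> > 0" and \<rho>: "\<rho> = \<alpha> \<or> \<rho> = 1/\<alpha>" and "u0 \<le> v0"
  shows "along l p (ramp \<rho> u0 v0) \<in> realizable \<alpha>"
proof -
  have "\<rho> > 0" using \<rho> \<alpha> by auto
  then have "ramp \<rho> u0 v0 = (\<lambda>u. kink (v0 + \<rho> * (u0 - v0)) (1/\<rho> - 1) (kink v0 (\<rho> - 1) u))"
    using ramp_eq_kink_kink assms by blast
  then have "along l p (ramp \<rho> u0 v0)
      = (\<lambda>y. along l p (kink (v0 + \<rho> * (u0 - v0)) (1/\<rho> - 1)) (along l p (kink v0 (\<rho> - 1)) y))"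
    by (simp add: along_along[OF lp])
  also have "\<dots> \<in> realizable \<alpha>"
    by (rule realizable_comp; rule realizable_along_kink[OF lp \<alpha>]) (use \<rho> in auto)
  finally show ?thesis .
qed

lemma mono_ramp:
  assumes "\<rho> > 0" "u0 \<le> v0"
  shows "mono (ramp \<rho> u0 v0)"
proof (rule monoI)
  fix u u' :: real
  assume uu': "u \<le> u'"
  define c where "c x = min (max x u0) v0" for x
  have c: "0 \<le> c u' - c u" "c u' - c u \<le> u' - u" using assms uu' by (auto simp: c_def min_def max_def)
  have "ramp \<rho> u0 v0 u' - ramp \<rho> u0 v0 u = (u' - u) + (\<rho> - 1) * (c u' - c u)"
    by (simp add: ramp_def c_def algebra_simps)
  also have "\<dots> \<ge> 0"
  proof (cases "\<rho> \<ge> 1")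
    case True
    then show ?thesis using c by simp
  next
    case False
    then have "(\<rho> - 1) * (c u' - c u) \<ge> (\<rho> - 1) * (u' - u)"
      using c by (intro mult_left_mono_neg) auto
    moreover have "\<rho> * (u' - u) \<ge> 0" using assms uu' by simp
    ultimately show ?thesis by (simp add: algebra_simps)
  qed
  finally show "ramp \<rho> u0 v0 u \<le> ramp \<rho> u0 v0 u'" by simp
qed

primrec ramp_chain :: "real \<Rightarrow> (nat \<Rightarrow> real) \<Rightarrow> (nat \<Rightarrow> real) \<Rightarrow> nat \<Rightarrow> real \<Rightarrow> real" where
  "ramp_chain \<rho> U V 0 u = u"
| "ramp_chain \<rho> U V (Suc n) u = ramp \<rho> (U n) (V n) (ramp_chain \<rho> U V n u)"

lemma realizable_along_ramp_chain:
  fixes l p :: "real ^ 'n"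
  assumes lp: "l \<bullet> p = 1" and "\<alpha> > 0" and "\<rho> = \<alpha> \<or> \<rho> = 1/\<alpha>" and "\<And>j. U j \<le> V j"
  shows "along l p (ramp_chain \<rho> U V n) \<in> realizable \<alpha>"
proof (induction n)
  case 0
  have "along l p (ramp_chain \<rho> U V 0) = (\<lambda>y. y)" by (simp add: along_def fun_eq_iff)
  then show ?case using realizable_id by metis
next
  case (Suc n)
  have "along l p (ramp_chain \<rho> U V (Suc n))
      = (\<lambda>y. along l p (ramp \<rho> (U n) (V n)) (along l p (ramp_chain \<rho> U V n) y))"
    by (simp add: along_along[OF lp] ramp_chain.simps(2)[abs_def])
  also have "\<dots> \<in> realizable \<alpha>"
    by (rule realizable_comp[OF Suc realizable_along_ramp]) (use assms in auto)
  finally show ?case .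
qed

lemma mono_ramp_chain:
  assumes "\<rho> > 0" "\<And>j. U j \<le> V j"
  shows "mono (ramp_chain \<rho> U V n)"
proof (induction n)
  case (Suc n)
  have "mono (ramp \<rho> (U n) (V n))" by (rule mono_ramp) (use assms in auto)
  with Suc.IH show ?case by (intro monoI) (simp add: monoD)
qed (simp add: mono_def)

lemma ramp_chain_above:
  assumes "\<And>j. U j \<le> V j" "\<And>j. V j \<le> U (Suc j)" "U n \<le> u"
  shows "ramp_chain \<rho> U V n u = u"
  using assms(3)
proof (induction n)
  case (Suc n)
  have "U n \<le> u" using assms(1,2)[of n] Suc.prems by linarith
  moreover have "V n \<le> u" using assms(2)[of n] Suc.prems by linarith
  ultimately show ?case using assms(1)[of n] Suc.IH by (simp add: ramp_def)
qed simp

lemma ramp_chain_Suc_below: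
  assumes "\<rho> > 0" "\<And>j. U j \<le> V j" "\<And>j. V j \<le> U (Suc j)" "u \<le> U n"
  shows "ramp_chain \<rho> U V (Suc n) u = ramp_chain \<rho> U V n u + (\<rho> - 1) * (U n - V n)"
proof -
  have "ramp_chain \<rho> U V n u \<le> ramp_chain \<rho> U V n (U n)"
    using mono_ramp_chain[OF assms(1,2)] assms(4) by (rule monoD)
  also have "\<dots> = U n" using ramp_chain_above[of U V, OF assms(2,3)] by simp
  finally show ?thesis using assms(2)[of n] by (simp add: ramp_def min_def max_def)
qed

section \<open>Uniform approximation on compact sets\<close>

text \<open>Every difference quotient of \<open>u \<mapsto> u + g u\<close> lies between \<open>1\<close> and \<open>\<rho>\<close>.\<close>
definition slopes_within :: "real \<Rightarrow> (real \<Rightarrow> real) \<Rightarrow> bool" where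
  "slopes_within \<rho> g \<longleftrightarrow>
     (\<forall>u u'. u \<le> u' \<longrightarrow> 0 \<le> (g u' - g u) / (\<rho> - 1) \<and> (g u' - g u) / (\<rho> - 1) \<le> u' - u)"

lemma abs_diff_le_of_slopes_within:
  fixes g :: "real \<Rightarrow> real"
  assumes hg: "slopes_within \<rho> g"
    and "\<rho> \<noteq> 1" and "u \<le> u'"
  shows "\<bar>g u' - g u\<bar> \<le> \<bar>\<rho> - 1\<bar> * (u' - u)"
proof -
  define q where "q = (g u' - g u) / (\<rho> - 1)"
  have "\<rho> - 1 \<noteq> 0" using \<open>\<rho> \<noteq> 1\<close> by simp
  then have "g u' - g u = (\<rho> - 1) * q" by (simp add: q_def)
  moreover have "0 \<le> q" "q \<le> u' - u" using hg \<open>u \<le> u'\<close> by (simp_all add: slopes_within_def q_def)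
  ultimately show ?thesis by (simp add: abs_mult mult_left_mono)
qed

lemma ramp_nodes_ordered:
  fixes g :: "real \<Rightarrow> real"
  assumes hg: "slopes_within \<rho> g"
    and "\<Delta> > 0" and U: "\<And>j. U j = a + real j * \<Delta>"
    and V: "\<And>j. V j = U j + (g (U (Suc j)) - g (U j)) / (\<rho> - 1)"
  shows "U j \<le> V j" "V j \<le> U (Suc j)"
proof -
  have "U j \<le> U (Suc j)" using \<open>\<Delta> > 0\<close> by (simp add: U)
  then have "0 \<le> (g (U (Suc j)) - g (U j)) / (\<rho> - 1)"
    "(g (U (Suc j)) - g (U j)) / (\<rho> - 1) \<le> U (Suc j) - U j"
    using hg unfolding slopes_within_def by blast+
  then show "U j \<le> V j" "V j \<le> U (Suc j)" by (simp_all add: V)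
qed

text \<open>Below \<open>U j\<close> the \<open>j\<close>-th ramp shifts by \<open>-(g (U (Suc j)) - g (U j))\<close>, so the chain
  telescopes to \<open>u + g u - g (U n)\<close> up to the error made on the current cell.\<close>
lemma ramp_chain_approx:
  fixes g :: "real \<Rightarrow> real"
  assumes \<rho>: "\<rho> > 0" "\<rho> \<noteq> 1" and \<Delta>: "\<Delta> > 0"
    and hg: "slopes_within \<rho> g"
    and U: "\<And>j. U j = a + real j * \<Delta>"
    and V: "\<And>j. V j = U j + (g (U (Suc j)) - g (U j)) / (\<rho> - 1)"
    and u: "a \<le> u" "u \<le> U n"
  shows "\<bar>ramp_chain \<rho> U V n u - (u + g u - g (U n))\<bar> \<le> 2 * \<bar>\<rho> - 1\<bar> * \<Delta>"
  using u
proof (induction n arbitrary: u)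
  case 0
  then show ?case using \<Delta> by (simp add: U)
next
  case (Suc n)
  note nodes = ramp_nodes_ordered[OF hg \<Delta> U V]
  have USuc: "U (Suc n) = U n + \<Delta>" by (simp add: U algebra_simps)
  have shift: "(\<rho> - 1) * (U n - V n) = - (g (U (Suc n)) - g (U n))" using \<rho> by (simp add: V)
  have gb: "\<bar>g u' - g u\<bar> \<le> \<bar>\<rho> - 1\<bar> * (u' - u)" if "u \<le> u'" for u u'
    using abs_diff_le_of_slopes_within[OF hg \<rho>(2) that] .
  show ?case
  proof (cases "u \<le> U n")
    case True
    then have "ramp_chain \<rho> U V (Suc n) u - (u + g u - g (U (Suc n)))
        = ramp_chain \<rho> U V n u - (u + g u - g (U n))"
      using ramp_chain_Suc_below[of \<rho> U V, OF \<rho>(1) nodes] shift by simp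
    then show ?thesis using Suc.IH[OF Suc.prems(1) True] by simp
  next
    case False
    then have X: "ramp_chain \<rho> U V n u = u" using ramp_chain_above[of U V, OF nodes] by simp
    define c where "c = min (max u (U n)) (V n)"
    have c: "U n \<le> c" "c \<le> V n" using nodes(1)[of n] by (auto simp: c_def)
    have "\<bar>(\<rho> - 1) * (c - V n)\<bar> \<le> \<bar>\<rho> - 1\<bar> * (V n - U n)"
      using c by (simp add: abs_mult mult_left_mono)
    also have "\<dots> = \<bar>(\<rho> - 1) * (U n - V n)\<bar>" using nodes(1)[of n] by (simp add: abs_mult)
    also have "\<dots> = \<bar>g (U (Suc n)) - g (U n)\<bar>" using shift by simp
    also have "\<dots> \<le> \<bar>\<rho> - 1\<bar> * \<Delta>" using gb[of "U n" "U (Suc n)"] \<Delta> by (simp add: USuc)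
    finally have 1: "\<bar>(\<rho> - 1) * (c - V n)\<bar> \<le> \<bar>\<rho> - 1\<bar> * \<Delta>" .
    have "\<bar>g (U (Suc n)) - g u\<bar> \<le> \<bar>\<rho> - 1\<bar> * (U (Suc n) - u)" using gb Suc.prems(2) by blast
    also have "\<dots> \<le> \<bar>\<rho> - 1\<bar> * \<Delta>" using False by (intro mult_left_mono) (auto simp: USuc)
    finally have 2: "\<bar>g (U (Suc n)) - g u\<bar> \<le> \<bar>\<rho> - 1\<bar> * \<Delta>" .
    have "ramp_chain \<rho> U V (Suc n) u - (u + g u - g (U (Suc n)))
        = (\<rho> - 1) * (c - V n) + (g (U (Suc n)) - g u)"
      by (simp add: X ramp_def c_def)
    then show ?thesis using 1 2 by linarith
  qed
qed

definition approximable :: "real \<Rightarrow> (real ^ 'n \<Rightarrow> real ^ 'n) set" where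
  "approximable \<alpha> = {f. continuous_on UNIV f \<and> (\<forall>K e. compact K \<longrightarrow> e > 0 \<longrightarrow>
      (\<exists>G\<in>realizable \<alpha>. \<forall>x\<in>K. norm (f x - G x) < e))}"

lemma approximableD:
  "f \<in> approximable \<alpha> \<Longrightarrow> compact K \<Longrightarrow> e > 0 \<Longrightarrow> \<exists>G\<in>realizable \<alpha>. \<forall>x\<in>K. norm (f x - G x) < e"
  unfolding approximable_def by blast

lemma approximable_imp_continuous: "f \<in> approximable \<alpha> \<Longrightarrow> continuous_on UNIV f"
  unfolding approximable_def by blast

lemma realizable_imp_approximable: "G \<in> realizable \<alpha> \<Longrightarrow> G \<in> approximable \<alpha>"
  unfolding approximable_def
proof (intro CollectI conjI allI impI)
  assume G: "G \<in> realizable \<alpha>"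
  then show "continuous_on UNIV G" by (simp add: realizable_def)
  show "\<exists>G'\<in>realizable \<alpha>. \<forall>x\<in>K. norm (G x - G' x) < e" if "e > 0" for K e
    using G that by (intro bexI[of _ G]) auto
qed

text \<open>The inner map is approximated within the modulus of uniform continuity of the outer
  map on a ball containing both its exact and its approximate values.\<close>
lemma approximable_comp:
  fixes f g :: "real ^ 'n \<Rightarrow> real ^ 'n"
  assumes f: "f \<in> approximable \<alpha>" and g: "g \<in> approximable \<alpha>"
  shows "(\<lambda>x. g (f x)) \<in> approximable \<alpha>"
  unfolding approximable_def
proof (intro CollectI conjI allI impI)
  have cf: "continuous_on UNIV f" and cg: "continuous_on UNIV g"
    using f g by (auto intro: approximable_imp_continuous)
  then show "continuous_on UNIV (\<lambda>x. g (f x))"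
    by (metis continuous_on_compose2 subset_UNIV)
  fix K :: "(real ^ 'n) set" and e :: real
  assume K: "compact K" and e: "e > 0"
  have "compact (f ` K)" using cf K by (metis compact_continuous_image continuous_on_subset subset_UNIV)
  then obtain R where R: "\<forall>z\<in>f ` K. norm z \<le> R" using compact_imp_bounded bounded_iff by metis
  define B :: "(real ^ 'n) set" where "B = cball 0 (R + 1)"
  have "uniformly_continuous_on B g"
    using cg by (metis B_def compact_cball compact_uniformly_continuous continuous_on_subset subset_UNIV)
  then obtain d where d: "d > 0" "\<forall>x\<in>B. \<forall>x'\<in>B. dist x' x < d \<longrightarrow> dist (g x') (g x) < e/2"
    unfolding uniformly_continuous_on_def using e by (metis half_gt_zero)
  obtain G where G: "G \<in> realizable \<alpha>" "\<forall>z\<in>B. norm (g z - G z) < e/2"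
    using approximableD[OF g, of B "e/2"] e by (auto simp: B_def)
  obtain F where F: "F \<in> realizable \<alpha>" "\<forall>x\<in>K. norm (f x - F x) < min d 1"
    using approximableD[OF f K, of "min d 1"] d by auto
  show "\<exists>H\<in>realizable \<alpha>. \<forall>x\<in>K. norm (g (f x) - H x) < e"
  proof (intro bexI ballI)
    show "(\<lambda>x. G (F x)) \<in> realizable \<alpha>" by (rule realizable_comp[OF F(1) G(1)])
    fix x
    assume x: "x \<in> K"
    have fx: "f x \<in> B" using R x by (auto simp: B_def)
    have "norm (F x) \<le> norm (f x) + norm (f x - F x)"
      using norm_triangle_sub[of "F x" "f x"] by (simp add: norm_minus_commute)
    moreover have "norm (f x) \<le> R" "norm (f x - F x) < 1" using R x F(2) by auto
    ultimately have Fx: "F x \<in> B" by (simp add: B_def)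
    have "norm (g (f x) - g (F x)) < e/2"
      using d(2) fx Fx F(2) x by (simp add: dist_norm norm_minus_commute)
    moreover have "norm (g (F x) - G (F x)) < e/2" using G(2) Fx by blast
    ultimately show "norm (g (f x) - G (F x)) < e"
      using norm_diff_triangle_less[of "g (f x)" "g (F x)" "e/2" "G (F x)" "e/2"] by simp
  qed
qed

lemma approximable_uniform_limit:
  fixes f :: "real ^ 'n \<Rightarrow> real ^ 'n"
  assumes "continuous_on UNIV f"
    and approx: "\<And>e. e > 0 \<Longrightarrow> \<exists>f'\<in>approximable \<alpha>. \<forall>x. norm (f x - f' x) < e"
  shows "f \<in> approximable \<alpha>"
  unfolding approximable_def
proof (intro CollectI conjI allI impI)
  show "continuous_on UNIV f" by fact
  fix K :: "(real ^ 'n) set" and e :: real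
  assume K: "compact K" and e: "e > 0"
  obtain f' where f': "f' \<in> approximable \<alpha>" "\<forall>x. norm (f x - f' x) < e/2"
    using approx[of "e/2"] e by auto
  obtain G where G: "G \<in> realizable \<alpha>" "\<forall>x\<in>K. norm (f' x - G x) < e/2"
    using approximableD[OF f'(1) K, of "e/2"] e by auto
  have "norm (f x - G x) < e" if "x \<in> K" for x
  proof -
    have "norm (f x - f' x) < e/2" "norm (f' x - G x) < e/2" using f'(2) G(2) that by auto
    then show ?thesis using norm_diff_triangle_less by fastforce
  qed
  then show "\<exists>G\<in>realizable \<alpha>. \<forall>x\<in>K. norm (f x - G x) < e" using G(1) by blast
qed

lemma approximable_fold:
  fixes S :: "'a \<Rightarrow> real ^ 'n \<Rightarrow> real ^ 'n"
  assumes "\<And>k. k \<in> set ks \<Longrightarrow> S k \<in> approximable \<alpha>"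
  shows "fold S ks \<in> approximable \<alpha>"
  using assms
proof (induction ks)
  case Nil
  show ?case using realizable_imp_approximable[OF realizable_id] by (simp add: id_def)
next
  case (Cons k ks)
  have "S k \<in> approximable \<alpha>" using Cons.prems by simp
  moreover have "fold S ks \<in> approximable \<alpha>" using Cons by simp
  ultimately have "(\<lambda>y. fold S ks (S k y)) \<in> approximable \<alpha>" by (rule approximable_comp)
  then show ?case by (simp add: comp_def)
qed

text \<open>The map \<open>u \<mapsto> u + g u\<close> is interpolated on a grid of mesh \<open>\<Delta>\<close> covering the values of
  \<open>l \<bullet> y\<close> by a chain of ramps, up to the constant \<open>g (U N)\<close>.\<close>
lemma approximable_along:
  fixes l p :: "real ^ 'n" and g :: "real \<Rightarrow> real"
  assumes lp: "l \<bullet> p = 1" and \<alpha>: "\<alpha> > 0" and \<rho>: "\<rho> = \<alpha> \<or> \<rho> = 1/\<alpha>" "\<rho> \<noteq> 1"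
    and cg: "continuous_on UNIV g"
    and hg: "slopes_within \<rho> g"
  shows "along l p (\<lambda>u. u + g u) \<in> approximable \<alpha>"
  unfolding approximable_def
proof (intro CollectI conjI allI impI)
  have "continuous_on UNIV (\<lambda>y. g (l \<bullet> y))"
    by (rule continuous_on_compose2[OF cg]) (auto intro: continuous_intros)
  then show "continuous_on UNIV (along l p (\<lambda>u. u + g u))"
    unfolding along_def by (intro continuous_intros)
  fix K :: "(real ^ 'n) set" and e :: real
  assume K: "compact K" and e: "e > 0"
  have "bounded ((\<lambda>y. l \<bullet> y) ` K)"
    by (intro compact_imp_bounded compact_continuous_image continuous_intros K)
  then obtain R where R: "\<forall>y\<in>K. \<bar>l \<bullet> y\<bar> \<le> R" unfolding bounded_real by auto
  define A where "A = 2 * \<bar>\<rho> - 1\<bar> * (2 * \<bar>R\<bar> + 2) * norm p"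
  obtain N :: nat where N: "A / e < real N" using reals_Archimedean2 by blast
  moreover have "0 \<le> A / e" using e by (simp add: A_def)
  ultimately have N0: "N > 0" by (cases N) auto
  define \<Delta> where "\<Delta> = (2 * \<bar>R\<bar> + 2) / real N"
  have \<Delta>: "\<Delta> > 0" using N0 by (simp add: \<Delta>_def)
  define U where "U j = - \<bar>R\<bar> - 1 + real j * \<Delta>" for j
  define V where "V j = U j + (g (U (Suc j)) - g (U j)) / (\<rho> - 1)" for j
  have UN: "U N = \<bar>R\<bar> + 1" using N0 by (simp add: U_def \<Delta>_def)
  note nodes = ramp_nodes_ordered[OF hg \<Delta> U_def V_def]
  define G where "G y = along l p (ramp_chain \<rho> U V N) y + g (U N) *\<^sub>R p" for y
  show "\<exists>G\<in>realizable \<alpha>. \<forall>x\<in>K. norm (along l p (\<lambda>u. u + g u) x - G x) < e"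
  proof (intro bexI ballI)
    show "G \<in> realizable \<alpha>" unfolding G_def
      by (rule realizable_comp[OF realizable_along_ramp_chain[OF lp \<alpha> \<rho>(1) nodes(1)]
            realizable_affine[OF linear_id[unfolded id_def]]])
    fix y
    assume y: "y \<in> K"
    then have u: "- \<bar>R\<bar> - 1 \<le> l \<bullet> y" "l \<bullet> y \<le> U N" using R by (force simp: UN)+
    have "along l p (\<lambda>u. u + g u) y - G y
        = ((l \<bullet> y + g (l \<bullet> y) - g (U N)) - ramp_chain \<rho> U V N (l \<bullet> y)) *\<^sub>R p"
      by (simp add: G_def along_def algebra_simps)
    then have "norm (along l p (\<lambda>u. u + g u) y - G y)
        = \<bar>ramp_chain \<rho> U V N (l \<bullet> y) - (l \<bullet> y + g (l \<bullet> y) - g (U N))\<bar> * norm p"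
      by (simp add: abs_minus_commute)
    also have "\<dots> \<le> (2 * \<bar>\<rho> - 1\<bar> * \<Delta>) * norm p"
      using ramp_chain_approx[OF _ \<rho>(2) \<Delta> hg U_def V_def u] \<alpha> \<rho>(1) by (intro mult_right_mono) auto
    also have "\<dots> = A / real N" by (simp add: A_def \<Delta>_def)
    also have "\<dots> < e" using N N0 e by (simp add: divide_less_eq mult.commute pos_divide_less_eq)
    finally show "norm (along l p (\<lambda>u. u + g u) y - G y) < e" .
  qed
qed

section \<open>Tanh ridge steps\<close>

lemma tanh_increment_bounds:
  fixes x y :: real
  assumes "x \<le> y"
  shows "0 \<le> tanh y - tanh x" "tanh y - tanh x \<le> y - x"
proof -
  have "tanh x \<le> tanh y" using assms by simp
  moreover have "tanh y - tanh x \<le> y - x"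
  proof (cases "x = y")
    case False
    then have "x < y" using assms by simp
    have deriv: "DERIV tanh z :> 1 - tanh z ^ 2" if "x \<le> z" "z \<le> y" for z :: real
      by (auto intro!: derivative_eq_intros)
    obtain z where "tanh y - tanh x = (y - x) * (1 - tanh z ^ 2)"
      using MVT2[OF \<open>x < y\<close> deriv] by blast
    moreover have "0 \<le> tanh z ^ 2" by simp
    ultimately show ?thesis using \<open>x < y\<close> by (simp add: mult_left_le)
  qed simp
  ultimately show "0 \<le> tanh y - tanh x" "tanh y - tanh x \<le> y - x" by simp_all
qed

lemma abs_tanh_diff_le: "\<bar>tanh x - tanh y\<bar> \<le> \<bar>x - y :: real\<bar>"
  using tanh_increment_bounds[of x y] tanh_increment_bounds[of y x] by (cases "x \<le> y") auto

lemma abs_tanh_le_1: "\<bar>tanh (x :: real)\<bar> \<le> 1"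
  using tanh_real_bounds[of x] by auto

definition tanh_step :: "real ^ 'n \<Rightarrow> real ^ 'n \<Rightarrow> real \<Rightarrow> real \<Rightarrow> real ^ 'n \<Rightarrow> real ^ 'n" where
  "tanh_step c w \<beta> h y = y + (h * tanh (w \<bullet> y + \<beta>)) *\<^sub>R c"

text \<open>Ramp chains with slopes \<open>\<alpha>\<close> and \<open>1/\<alpha>\<close> interpolate every slope within this distance
  of \<open>1\<close>, on either side.\<close>
definition leaky_margin :: "real \<Rightarrow> real" where
  "leaky_margin \<alpha> = min \<bar>\<alpha> - 1\<bar> \<bar>1/\<alpha> - 1\<bar>"

lemma leaky_margin_pos: "\<alpha> > 0 \<Longrightarrow> \<alpha> \<noteq> 1 \<Longrightarrow> leaky_margin \<alpha> > 0"
  by (auto simp: leaky_margin_def field_simps)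

lemma slope_choice:
  assumes \<alpha>: "\<alpha> > 0" "\<alpha> \<noteq> 1" and x: "\<bar>x\<bar> \<le> leaky_margin \<alpha>"
  obtains \<rho> where "\<rho> = \<alpha> \<or> \<rho> = 1/\<alpha>" "\<rho> \<noteq> 1" "0 \<le> x / (\<rho> - 1)" "x / (\<rho> - 1) \<le> 1"
proof -
  obtain \<rho>1 \<rho>2 where \<rho>: "{\<rho>1, \<rho>2} = {\<alpha>, 1/\<alpha>}" "\<rho>1 < 1" "1 < \<rho>2"
  proof (cases "\<alpha> > 1")
    case True
    then have "1/\<alpha> < 1" by simp
    then show thesis using that[of "1/\<alpha>" \<alpha>] True by (simp add: insert_commute)
  next
    case False
    then have "\<alpha> < 1" "1 < 1/\<alpha>" using \<alpha> by (simp_all add: field_simps)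
    then show thesis using that[of \<alpha> "1/\<alpha>"] by simp
  qed
  then have margin: "leaky_margin \<alpha> \<le> 1 - \<rho>1" "leaky_margin \<alpha> \<le> \<rho>2 - 1"
    by (auto simp: leaky_margin_def doubleton_eq_iff)
  have \<rho>12: "\<rho>1 = \<alpha> \<or> \<rho>1 = 1/\<alpha>" "\<rho>2 = \<alpha> \<or> \<rho>2 = 1/\<alpha>"
    using \<rho>(1) by (auto simp: doubleton_eq_iff)
  show thesis
  proof (cases "x \<ge> 0")
    case True
    then have "0 \<le> x / (\<rho>2 - 1)" "x / (\<rho>2 - 1) \<le> 1"
      using \<rho>(3) margin(2) x by (simp_all add: pos_divide_le_eq)
    then show thesis using that \<rho>12(2) \<rho>(3) by simp
  next
    case False
    have "x / (\<rho>1 - 1) = (- x) / (1 - \<rho>1)" by (metis minus_diff_eq minus_divide_divide)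
    moreover have "0 \<le> (- x) / (1 - \<rho>1)" using False \<rho>(2) by (intro divide_nonneg_pos) simp_all
    moreover have "(- x) / (1 - \<rho>1) \<le> 1"
      using margin(1) x \<rho>(2) by (subst divide_le_eq_1_pos) simp_all
    ultimately show thesis using that \<rho>12(1) \<rho>(2) by simp
  qed
qed

lemma approximable_tanh_step_transversal:
  fixes c w :: "real ^ 'n"
  assumes \<alpha>: "\<alpha> > 0" "\<alpha> \<noteq> 1" and "h \<ge> 0" and wc: "w \<bullet> c \<noteq> 0"
    and small: "\<bar>w \<bullet> c\<bar> * h \<le> leaky_margin \<alpha>"
  shows "tanh_step c w \<beta> h \<in> approximable \<alpha>"
proof -
  define \<mu> where "\<mu> = w \<bullet> c"
  define g where "g u = \<mu> * h * tanh (u + \<beta>)" for u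
  have "w \<bullet> ((1/\<mu>) *\<^sub>R c) = 1" using wc by (simp add: \<mu>_def)
  moreover have "tanh_step c w \<beta> h = along w ((1/\<mu>) *\<^sub>R c) (\<lambda>u. u + g u)"
    using wc by (simp add: fun_eq_iff tanh_step_def along_def g_def \<mu>_def)
  moreover have "continuous_on UNIV g" unfolding g_def by (intro continuous_intros) simp
  moreover obtain \<rho> where \<rho>: "\<rho> = \<alpha> \<or> \<rho> = 1/\<alpha>" "\<rho> \<noteq> 1"
    and q: "0 \<le> \<mu> * h / (\<rho> - 1)" "\<mu> * h / (\<rho> - 1) \<le> 1"
    using slope_choice[OF \<alpha>, of "\<mu> * h"] small \<open>h \<ge> 0\<close> by (auto simp: \<mu>_def abs_mult)
  moreover have "slopes_within \<rho> g"
    unfolding slopes_within_def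
  proof (intro allI impI)
    fix u u' :: real
    assume "u \<le> u'"
    define D where "D = tanh (u' + \<beta>) - tanh (u + \<beta>)"
    have D: "0 \<le> D" "D \<le> u' - u"
      using tanh_increment_bounds[of "u + \<beta>" "u' + \<beta>"] \<open>u \<le> u'\<close> by (simp_all add: D_def)
    have "(g u' - g u) / (\<rho> - 1) = (\<mu> * h / (\<rho> - 1)) * D"
      by (simp add: g_def D_def right_diff_distrib diff_divide_distrib)
    moreover have "(\<mu> * h / (\<rho> - 1)) * D \<le> D" using q D by (intro mult_left_le_one_le)
    moreover have "0 \<le> (\<mu> * h / (\<rho> - 1)) * D" using q D by (intro mult_nonneg_nonneg)
    ultimately show "0 \<le> (g u' - g u) / (\<rho> - 1) \<and> (g u' - g u) / (\<rho> - 1) \<le> u' - u"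
      using D by linarith
  qed
  ultimately show ?thesis by (metis approximable_along \<alpha>(1))
qed

lemma tanh_step_split_error:
  fixes c w :: "real ^ 'n"
  assumes "w \<bullet> c = 0" "h \<ge> 0" "\<delta> \<ge> 0"
  shows "norm (tanh_step c w \<beta> h y - tanh_step (- (\<delta> *\<^sub>R w)) w \<beta> h (tanh_step (c + \<delta> *\<^sub>R w) w \<beta> h y))
      \<le> 2 * h * \<delta> * norm w"
proof -
  define t where "t = tanh (w \<bullet> y + \<beta>)"
  define t' where "t' = tanh (w \<bullet> tanh_step (c + \<delta> *\<^sub>R w) w \<beta> h y + \<beta>)"
  have "tanh_step c w \<beta> h y - tanh_step (- (\<delta> *\<^sub>R w)) w \<beta> h (tanh_step (c + \<delta> *\<^sub>R w) w \<beta> h y)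
      = (h * \<delta> * (t' - t)) *\<^sub>R w"
    by (simp add: tanh_step_def t_def t'_def algebra_simps)
  then have "norm (tanh_step c w \<beta> h y - tanh_step (- (\<delta> *\<^sub>R w)) w \<beta> h (tanh_step (c + \<delta> *\<^sub>R w) w \<beta> h y))
      = h * \<delta> * \<bar>t' - t\<bar> * norm w"
    using assms by (simp add: abs_mult)
  also have "\<dots> \<le> h * \<delta> * 2 * norm w"
    using abs_tanh_le_1[of "w \<bullet> y + \<beta>"] abs_tanh_le_1[of "w \<bullet> tanh_step (c + \<delta> *\<^sub>R w) w \<beta> h y + \<beta>"]
      assms
    by (intro mult_right_mono mult_left_mono) (simp_all add: t_def t'_def)
  finally show ?thesis by (simp add: algebra_simps)
qed

lemma exists_small_factor:
  fixes A B \<theta> e :: real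
  assumes "0 \<le> A" "0 \<le> B" "0 < \<theta>" "0 < e"
  shows "\<exists>\<delta>>0. \<delta> * A \<le> \<theta> \<and> \<delta> * B < e"
proof (intro exI conjI)
  define \<delta> where "\<delta> = min (\<theta> / (A + 1)) (e / (B + 1))"
  show "\<delta> > 0" using assms by (simp add: \<delta>_def)
  have "\<delta> * A \<le> \<theta> / (A + 1) * A" using assms by (intro mult_right_mono) (auto simp: \<delta>_def)
  also have "\<dots> \<le> \<theta>" using assms by (simp add: field_simps)
  finally show "\<delta> * A \<le> \<theta>" .
  have "\<delta> * B \<le> e / (B + 1) * B" using assms by (intro mult_right_mono) (auto simp: \<delta>_def)
  also have "\<dots> < e" using assms by (simp add: field_simps)
  finally show "\<delta> * B < e" .
qed

text \<open>If \<open>w \<bullet> c = 0\<close> the step does not change \<open>w \<bullet> y\<close>, so it is not of the form \<open>along\<close>; it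
  is the uniform limit of two transversal steps with directions \<open>c + \<delta> w\<close> and \<open>- \<delta> w\<close>.\<close>
lemma approximable_tanh_step:
  fixes c w :: "real ^ 'n"
  assumes \<alpha>: "\<alpha> > 0" "\<alpha> \<noteq> 1" and h: "h \<ge> 0"
    and small: "\<bar>w \<bullet> c\<bar> * h \<le> leaky_margin \<alpha>"
  shows "tanh_step c w \<beta> h \<in> approximable \<alpha>"
proof (cases "w = 0 \<or> w \<bullet> c \<noteq> 0")
  case True
  then show ?thesis
  proof
    assume "w = 0"
    then have "tanh_step c w \<beta> h = (\<lambda>y. id y + (h * tanh \<beta>) *\<^sub>R c)"
      by (simp add: fun_eq_iff tanh_step_def)
    then show ?thesis using realizable_imp_approximable[OF realizable_affine[OF linear_id]] by metis
  qed (rule approximable_tanh_step_transversal[OF \<alpha> h _ small])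
next
  case False
  then have w: "w \<bullet> w > 0" and wc: "w \<bullet> c = 0" by auto
  show ?thesis
  proof (rule approximable_uniform_limit)
    show "continuous_on UNIV (tanh_step c w \<beta> h)"
      unfolding tanh_step_def by (intro continuous_intros) simp
    fix e :: real
    assume e: "e > 0"
    obtain \<delta> where \<delta>: "\<delta> > 0" "\<delta> * ((w \<bullet> w) * h) \<le> leaky_margin \<alpha>" "\<delta> * (2 * h * norm w) < e"
      using exists_small_factor[of "(w \<bullet> w) * h" "2 * h * norm w" "leaky_margin \<alpha>" e]
        h e leaky_margin_pos[OF \<alpha>] by auto
    then have small': "\<bar>w \<bullet> (c + \<delta> *\<^sub>R w)\<bar> * h \<le> leaky_margin \<alpha>"
      "\<bar>w \<bullet> (- (\<delta> *\<^sub>R w))\<bar> * h \<le> leaky_margin \<alpha>"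
      using wc w by (simp_all add: inner_add_right abs_mult mult.assoc)
    have close: "2 * h * \<delta> * norm w < e" using \<delta>(3) by (simp add: algebra_simps)
    have "w \<bullet> (c + \<delta> *\<^sub>R w) \<noteq> 0" "w \<bullet> (- (\<delta> *\<^sub>R w)) \<noteq> 0"
      using wc w \<delta>(1) by (simp_all add: inner_add_right)
    then have "tanh_step (c + \<delta> *\<^sub>R w) w \<beta> h \<in> approximable \<alpha>"
      "tanh_step (- (\<delta> *\<^sub>R w)) w \<beta> h \<in> approximable \<alpha>"
      using approximable_tanh_step_transversal[OF \<alpha> h] small' by blast+
    then have "(\<lambda>y. tanh_step (- (\<delta> *\<^sub>R w)) w \<beta> h (tanh_step (c + \<delta> *\<^sub>R w) w \<beta> h y)) \<in> approximable \<alpha>"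
      by (rule approximable_comp)
    moreover have "norm (tanh_step c w \<beta> h y
        - tanh_step (- (\<delta> *\<^sub>R w)) w \<beta> h (tanh_step (c + \<delta> *\<^sub>R w) w \<beta> h y)) < e" for y
      using tanh_step_split_error[OF wc h, of \<delta> \<beta> y] \<delta>(1) close by simp
    ultimately show "\<exists>f'\<in>approximable \<alpha>. \<forall>y. norm (tanh_step c w \<beta> h y - f' y) < e"
      by (intro bexI[of _ "\<lambda>y. tanh_step (- (\<delta> *\<^sub>R w)) w \<beta> h (tanh_step (c + \<delta> *\<^sub>R w) w \<beta> h y)"]) auto
  qed
qed

section \<open>Piecewise constant coefficients\<close>

text \<open>The constant value on an interval avoiding \<open>P\<close> is referred to through the value at its
  midpoint.\<close>
definition constant_off :: "real \<Rightarrow> real set \<Rightarrow> (real \<Rightarrow> 'a) \<Rightarrow> bool" where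
  "constant_off \<tau> P f \<longleftrightarrow> (\<forall>u v. 0 \<le> u \<longrightarrow> u < v \<longrightarrow> v \<le> \<tau> \<longrightarrow> P \<inter> {u<..<v} = {} \<longrightarrow>
      (\<forall>s\<in>{u<..<v}. f s = f ((u + v) / 2)))"

lemma constant_off_subset: "constant_off \<tau> P f \<Longrightarrow> P \<subseteq> Q \<Longrightarrow> constant_off \<tau> Q f"
  unfolding constant_off_def by blast

lemma sorted_list_cell:
  fixes xs :: "real list"
  assumes "sorted_wrt (<) xs" "xs \<noteq> []" "hd xs \<le> s" "s \<le> last xs" "s \<notin> set xs"
  shows "\<exists>j. Suc j < length xs \<and> xs ! j < s \<and> s < xs ! Suc j"
  using assms
proof (induction xs)
  case (Cons x ys)
  have "x < s" "ys \<noteq> []" using Cons.prems by (auto simp: order.order_iff_strict)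
  show ?case
  proof (cases "s < hd ys")
    case True
    then show ?thesis using \<open>x < s\<close> \<open>ys \<noteq> []\<close> by (intro exI[of _ 0]) (auto simp: hd_conv_nth)
  next
    case False
    then obtain j where "Suc j < length ys" "ys ! j < s" "s < ys ! Suc j"
      using Cons \<open>ys \<noteq> []\<close> by auto
    then show ?thesis by (intro exI[of _ "Suc j"]) auto
  qed
qed simp

lemma constant_off_partition:
  assumes ts: "sorted_wrt (<) ts" "ts \<noteq> []" "hd ts = 0" "last ts = \<tau>"
    and on_cell: "\<And>j s. Suc j < length ts \<Longrightarrow> s \<in> {ts ! j<..<ts ! Suc j} \<Longrightarrow>
      f s = f ((ts ! j + ts ! Suc j) / 2)"
  shows "constant_off \<tau> (set ts) f" "finite (f ` {0..\<tau>})"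
proof -
  have cell: "\<exists>j. Suc j < length ts \<and> s \<in> {ts ! j<..<ts ! Suc j}" if "s \<in> {0..\<tau>} - set ts" for s
    using sorted_list_cell[OF ts(1,2), of s] ts that by auto
  show "constant_off \<tau> (set ts) f"
    unfolding constant_off_def
  proof (intro allI impI ballI)
    fix u v s
    assume uv: "0 \<le> u" "u < v" "v \<le> \<tau>" "set ts \<inter> {u<..<v} = {}" and s: "s \<in> {u<..<v}"
    define m where "m = (u + v) / 2"
    have m: "m \<in> {u<..<v}" using uv by (auto simp: m_def)
    then have "m \<in> {0..\<tau>} - set ts" using uv by auto
    then obtain j where j: "Suc j < length ts" "m \<in> {ts ! j<..<ts ! Suc j}"
      using cell by blast
    have "ts ! j \<in> set ts" "ts ! Suc j \<in> set ts" using j(1) by auto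
    then have "ts ! j \<le> u" "v \<le> ts ! Suc j" using uv(4) j(2) m by (auto simp: not_less[symmetric])
    then have "s \<in> {ts ! j<..<ts ! Suc j}" using s by auto
    then have "f s = f ((ts ! j + ts ! Suc j) / 2)" by (rule on_cell[OF j(1)])
    moreover have "f m = f ((ts ! j + ts ! Suc j) / 2)" by (rule on_cell[OF j])
    ultimately show "f s = f ((u + v) / 2)" by (simp add: m_def)
  qed
  have "f ` {0..\<tau>} \<subseteq> f ` set ts \<union> (\<lambda>j. f ((ts ! j + ts ! Suc j) / 2)) ` {..<length ts}"
  proof (rule image_subsetI)
    fix s
    assume s: "s \<in> {0..\<tau>}"
    show "f s \<in> f ` set ts \<union> (\<lambda>j. f ((ts ! j + ts ! Suc j) / 2)) ` {..<length ts}"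
    proof (cases "s \<in> set ts")
      case False
      then obtain j where j: "Suc j < length ts" "s \<in> {ts ! j<..<ts ! Suc j}"
        using cell s by blast
      then have "f s = f ((ts ! j + ts ! Suc j) / 2)" by (rule on_cell)
      moreover have "j \<in> {..<length ts}" using j by simp
      ultimately show ?thesis by blast
    qed simp
  qed
  then show "finite (f ` {0..\<tau>})" by (rule finite_subset) simp
qed

lemma piecewise_constant_onE:
  assumes "piecewise_constant_on \<tau> f"
  obtains P where "finite P" "constant_off \<tau> P f" "finite (f ` {0..\<tau>})"
proof -
  obtain ts :: "real list" where ts: "length ts \<ge> 2" "sorted_wrt (<) ts" "hd ts = 0" "last ts = \<tau>"
    and const: "\<forall>j < length ts - 1. \<exists>c. \<forall>t \<in> {ts ! j <..< ts ! (j + 1)}. f t = c"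
    using assms unfolding piecewise_constant_on_def by blast
  have "ts \<noteq> []" using ts(1) by auto
  have on_cell: "f s = f ((ts ! j + ts ! Suc j) / 2)"
    if j: "Suc j < length ts" and s: "s \<in> {ts ! j<..<ts ! Suc j}" for j s
  proof -
    have "j < length ts - 1" using j by simp
    then obtain c where c: "\<forall>t \<in> {ts ! j <..< ts ! Suc j}. f t = c" using const by auto
    have "(ts ! j + ts ! Suc j) / 2 \<in> {ts ! j <..< ts ! Suc j}" using s by auto
    then show ?thesis using c s by simp
  qed
  have "constant_off \<tau> (set ts) f"
    by (rule constant_off_partition(1)[OF ts(2) \<open>ts \<noteq> []\<close> ts(3,4)]) (rule on_cell)
  moreover have "finite (f ` {0..\<tau>})"
    by (rule constant_off_partition(2)[OF ts(2) \<open>ts \<noteq> []\<close> ts(3,4)]) (rule on_cell)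
  ultimately show thesis by (intro that[of "set ts"]) simp_all
qed

lemma piecewise_constant_family:
  fixes f :: "nat \<Rightarrow> real \<Rightarrow> 'a :: real_normed_vector"
  assumes "finite I" "\<And>i. i \<in> I \<Longrightarrow> piecewise_constant_on \<tau> (f i)"
  obtains P B where "finite P" "\<And>i. i \<in> I \<Longrightarrow> constant_off \<tau> P (f i)"
    "\<And>i s. i \<in> I \<Longrightarrow> s \<in> {0..\<tau>} \<Longrightarrow> norm (f i s) \<le> B"
proof -
  have "\<forall>i\<in>I. \<exists>P. finite P \<and> constant_off \<tau> P (f i) \<and> finite (f i ` {0..\<tau>})"
  proof
    fix i
    assume "i \<in> I"
    then obtain P where "finite P" "constant_off \<tau> P (f i)" "finite (f i ` {0..\<tau>})"
      by (rule piecewise_constant_onE[OF assms(2)])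
    then show "\<exists>P. finite P \<and> constant_off \<tau> P (f i) \<and> finite (f i ` {0..\<tau>})" by blast
  qed
  then have "\<exists>Q. \<forall>i\<in>I. finite (Q i) \<and> constant_off \<tau> (Q i) (f i) \<and> finite (f i ` {0..\<tau>})"
    by (rule bchoice)
  then obtain Q where Q: "\<forall>i\<in>I. finite (Q i) \<and> constant_off \<tau> (Q i) (f i) \<and> finite (f i ` {0..\<tau>})"
    by blast
  have "finite (\<Union>i\<in>I. f i ` {0..\<tau>})" using Q assms(1) by simp
  then have "bounded (\<Union>i\<in>I. f i ` {0..\<tau>})" by (rule finite_imp_bounded)
  then obtain B where bound: "\<And>i s. i \<in> I \<Longrightarrow> s \<in> {0..\<tau>} \<Longrightarrow> norm (f i s) \<le> B"
    unfolding bounded_iff by blast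
  have "finite (\<Union>i\<in>I. Q i)" using Q assms(1) by simp
  moreover have "constant_off \<tau> (\<Union>i\<in>I. Q i) (f i)" if "i \<in> I" for i
    using Q that constant_off_subset[of \<tau> "Q i" "f i" "\<Union>i\<in>I. Q i"] by blast
  ultimately show thesis using bound by (rule that)
qed

section \<open>Error of one-step schemes\<close>

lemma is_solution_increment:
  assumes "is_solution \<tau> F x0 x" and "0 \<le> u" "u \<le> v" "v \<le> \<tau>"
  shows "(\<lambda>s. F s (x s)) integrable_on {u..v}" "x v - x u = integral {u..v} (\<lambda>s. F s (x s))"
proof -
  have sol: "\<forall>t\<in>{0..\<tau>}. (\<lambda>s. F s (x s)) integrable_on {0..t} \<and> x t = x0 + integral {0..t} (\<lambda>s. F s (x s))"
    using assms(1) unfolding is_solution_def by blast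
  then have int: "(\<lambda>s. F s (x s)) integrable_on {0..v}" using assms by auto
  then show "(\<lambda>s. F s (x s)) integrable_on {u..v}"
    by (rule integrable_subinterval_real) (use assms in auto)
  have "integral {0..u} (\<lambda>s. F s (x s)) + integral {u..v} (\<lambda>s. F s (x s)) = integral {0..v} (\<lambda>s. F s (x s))"
    using assms by (intro Henstock_Kurzweil_Integration.integral_combine int) auto
  then show "x v - x u = integral {u..v} (\<lambda>s. F s (x s))"
    using sol assms by (auto simp: algebra_simps)
qed

lemma is_solution_lipschitz:
  assumes "is_solution \<tau> F x0 x" and bound: "\<And>s y. s \<in> {0..\<tau>} \<Longrightarrow> norm (F s y) \<le> B"
    and "0 \<le> u" "u \<le> v" "v \<le> \<tau>"
  shows "norm (x v - x u) \<le> B * (v - u)"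
proof -
  note incr = is_solution_increment[OF assms(1,3-5)]
  have "norm (integral {u..v} (\<lambda>s. F s (x s))) \<le> integral {u..v} (\<lambda>s. B)"
    using incr(1) bound assms(3-5) by (intro integral_norm_bound_integral) auto
  then show ?thesis using incr(2) assms(4) by (simp add: mult.commute)
qed

lemma one_step_error:
  fixes F :: "real \<Rightarrow> real ^ 'n \<Rightarrow> real ^ 'n" and S :: "real ^ 'n \<Rightarrow> real ^ 'n"
  assumes sol: "is_solution \<tau> F x0 x"
    and bound: "\<And>s y. s \<in> {0..\<tau>} \<Longrightarrow> norm (F s y) \<le> B"
    and lip: "\<And>s y z. s \<in> {0..\<tau>} \<Longrightarrow> norm (F s y - F s z) \<le> L * norm (y - z)" and "L \<ge> 0"
    and h: "h > 0" and uv: "0 \<le> u" "v = u + h" "v \<le> \<tau>"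
    and S_Euler: "norm (S Y - (Y + h *\<^sub>R F ((u + v) / 2) Y)) \<le> C * h\<^sup>2"
    and S_move: "norm (S Y - Y) \<le> B * h"
  shows "norm (x v - S Y) \<le> norm (x u - Y) + 2 * B * h"
    and "(\<And>s. u < s \<Longrightarrow> s < v \<Longrightarrow> F s = F ((u + v) / 2)) \<Longrightarrow>
         norm (x v - S Y) \<le> (1 + h * L) * norm (x u - Y) + h\<^sup>2 * (L * B + C)"
proof -
  have uv': "0 \<le> u" "u \<le> v" "v \<le> \<tau>" using uv h by auto
  have x_lip: "norm (x v' - x u') \<le> B * (v' - u')" if "0 \<le> u'" "u' \<le> v'" "v' \<le> \<tau>" for u' v'
    by (rule is_solution_lipschitz[OF sol _ that]) (rule bound)
  have "norm (x v - S Y) \<le> norm (x v - x u) + norm (x u - Y) + norm (S Y - Y)"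
    using norm_triangle_ineq4[of "(x v - x u) + (x u - Y)" "S Y - Y"]
      norm_triangle_ineq[of "x v - x u" "x u - Y"] by simp
  then show "norm (x v - S Y) \<le> norm (x u - Y) + 2 * B * h"
    using x_lip[OF uv'] S_move uv by simp
  assume frozen: "\<And>s. u < s \<Longrightarrow> s < v \<Longrightarrow> F s = F ((u + v) / 2)"
  define r where "r = (u + v) / 2"
  define I where "I = integral {u..v} (\<lambda>s. F s (x s))"
  note incr = is_solution_increment[OF sol uv']
  have "r \<in> {0..\<tau>}" using uv' by (auto simp: r_def)
  have int: "((\<lambda>s. F s (x s) - F r Y) has_integral (I - h *\<^sub>R F r Y)) (cbox u v)"
    using has_integral_diff[OF integrable_integral[OF incr(1)] has_integral_const_real[of "F r Y" u v]] uv h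
    by (simp add: I_def)
  have "norm (F u Y) \<le> B" using bound uv' by simp
  then have B0: "0 \<le> B" by (rule order_trans[OF norm_ge_zero])
  then have L0: "0 \<le> L * (B * h + norm (x u - Y))" using \<open>L \<ge> 0\<close> h by simp
  have "norm (F s (x s) - F r Y) \<le> L * (B * h + norm (x u - Y))" if "s \<in> cbox u v - {u, v}" for s
  proof -
    have s: "u < s" "s < v" using that by auto
    have "norm (x s - Y) \<le> norm (x s - x u) + norm (x u - Y)" by (rule norm_diff_triangle_le) auto
    also have "\<dots> \<le> B * h + norm (x u - Y)"
    proof -
      have "B * (s - u) \<le> B * h" using B0 s uv by (intro mult_left_mono) auto
      then show ?thesis using x_lip[of u s] uv s by simp
    qed
    finally have "L * norm (x s - Y) \<le> L * (B * h + norm (x u - Y))" using \<open>L \<ge> 0\<close> by (rule mult_left_mono)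
    then show "norm (F s (x s) - F r Y) \<le> L * (B * h + norm (x u - Y))"
      using lip[OF \<open>r \<in> {0..\<tau>}\<close>, of "x s" Y] frozen[OF s] by (simp add: r_def)
  qed
  then have I: "norm (I - h *\<^sub>R F r Y) \<le> L * (B * h + norm (x u - Y)) * h"
    using has_integral_bound_spike_finite[OF L0 _ int, of "{u, v}"] uv h by simp
  have "norm (x v - S Y) \<le> norm (x u - Y) + norm (I - h *\<^sub>R F r Y) + norm (S Y - (Y + h *\<^sub>R F r Y))"
    using norm_triangle_ineq4[of "(x u - Y) + (I - h *\<^sub>R F r Y)" "S Y - (Y + h *\<^sub>R F r Y)"]
      norm_triangle_ineq[of "x u - Y" "I - h *\<^sub>R F r Y"] incr(2)
    by (simp add: I_def algebra_simps)
  also have "\<dots> \<le> norm (x u - Y) + L * (B * h + norm (x u - Y)) * h + C * h\<^sup>2"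
    using I S_Euler by (simp add: r_def)
  also have "\<dots> = (1 + h * L) * norm (x u - Y) + h\<^sup>2 * (L * B + C)"
    by (simp add: algebra_simps power2_eq_square)
  finally show "norm (x v - S Y) \<le> (1 + h * L) * norm (x u - Y) + h\<^sup>2 * (L * B + C)" .
qed

lemma one_step_error_constant_off:
  fixes F :: "real \<Rightarrow> real ^ 'n \<Rightarrow> real ^ 'n" and S :: "real ^ 'n \<Rightarrow> real ^ 'n"
  assumes sol: "is_solution \<tau> F x0 x"
    and bound: "\<And>s y. s \<in> {0..\<tau>} \<Longrightarrow> norm (F s y) \<le> B"
    and lip: "\<And>s y z. s \<in> {0..\<tau>} \<Longrightarrow> norm (F s y - F s z) \<le> L * norm (y - z)" and "L \<ge> 0"
    and F_const: "constant_off \<tau> P F"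
    and h: "h > 0" and u: "0 \<le> u" "u + h \<le> \<tau>"
    and S_Euler: "norm (S Y - (Y + h *\<^sub>R F (u + h / 2) Y)) \<le> C * h\<^sup>2" and "C \<ge> 0"
    and S_move: "norm (S Y - Y) \<le> B * h"
  shows "norm (x (u + h) - S Y) \<le> (1 + h * L) * norm (x u - Y) + h\<^sup>2 * (L * B + C)
    + (if P \<inter> {u<..<u + h} = {} then 0 else 2 * B * h)"
proof -
  have "norm (F u Y) \<le> B" using bound u h by simp
  then have "0 \<le> B" by (rule order_trans[OF norm_ge_zero])
  have mid: "(u + (u + h)) / 2 = u + h / 2" by simp
  note one = one_step_error[where F = F and B = B and L = L and C = C and S = S and Y = Y
      and u = u and v = "u + h", OF sol bound lip \<open>L \<ge> 0\<close> h u(1) refl u(2), unfolded mid,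
      OF _ _ S_Euler S_move]
  show ?thesis
  proof (cases "P \<inter> {u<..<u + h} = {}")
    case True
    have frozen: "F s = F (u + h / 2)" if "u < s" "s < u + h" for s
    proof -
      have "F s = F ((u + (u + h)) / 2)"
        using F_const[unfolded constant_off_def, rule_format, of u "u + h" s] u h that True by simp
      then show ?thesis by (simp only: mid)
    qed
    have "norm (x (u + h) - S Y) \<le> (1 + h * L) * norm (x u - Y) + h\<^sup>2 * (L * B + C)"
      by (rule one(2)) (assumption | rule frozen)+
    then show ?thesis using True by simp
  next
    case False
    have "norm (x u - Y) \<le> (1 + h * L) * norm (x u - Y)" using h \<open>L \<ge> 0\<close> by (simp add: algebra_simps)
    moreover have "0 \<le> h\<^sup>2 * (L * B + C)" using \<open>0 \<le> B\<close> \<open>L \<ge> 0\<close> \<open>C \<ge> 0\<close> by simp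
    ultimately show ?thesis using one(1) False by simp
  qed
qed

lemma discrete_gronwall:
  fixes e d :: "nat \<Rightarrow> real"
  assumes "e 0 = 0" "q \<ge> 1" "\<And>k. d k \<ge> 0" "\<And>k. k < n \<Longrightarrow> e (Suc k) \<le> q * e k + d k"
  shows "e n \<le> q ^ n * (\<Sum>k<n. d k)"
  using assms(4)
proof (induction n)
  case (Suc n)
  have "e (Suc n) \<le> q * e n + d n" using Suc.prems by simp
  also have "\<dots> \<le> q * (q ^ n * (\<Sum>k<n. d k)) + q ^ Suc n * d n"
  proof (rule add_mono)
    show "q * e n \<le> q * (q ^ n * (\<Sum>k<n. d k))"
      using Suc assms(2) by (intro mult_left_mono) auto
    have "1 * d n \<le> q ^ Suc n * d n"
      using assms(2,3) one_le_power[of q "Suc n"] by (intro mult_right_mono) auto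
    then show "d n \<le> q ^ Suc n * d n" by simp
  qed
  also have "\<dots> = q ^ Suc n * (\<Sum>k<Suc n. d k)" by (simp add: algebra_simps)
  finally show ?case .
qed (simp add: assms(1))

lemma card_cells_meeting_le:
  fixes P :: "real set"
  assumes "finite P" "h > 0"
  shows "card {k \<in> {..<n}. P \<inter> {real k * h<..<real (Suc k) * h} \<noteq> {}} \<le> card P"
proof -
  let ?K = "{k \<in> {..<n}. P \<inter> {real k * h<..<real (Suc k) * h} \<noteq> {}}"
  define q where "q k = (SOME q. q \<in> P \<inter> {real k * h<..<real (Suc k) * h})" for k
  have q: "q k \<in> P \<inter> {real k * h<..<real (Suc k) * h}" if k: "k \<in> ?K" for k
  proof -
    obtain q0 where "q0 \<in> P \<inter> {real k * h<..<real (Suc k) * h}" using k by blast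
    then show ?thesis unfolding q_def by (rule someI)
  qed
  have "inj_on q ?K"
  proof (rule inj_onI)
    fix k k'
    assume "k \<in> ?K" "k' \<in> ?K" "q k = q k'"
    then have "real k * h < real (Suc k') * h" "real k' * h < real (Suc k) * h"
      using q[of k] q[of k'] by auto
    then show "k = k'" using \<open>h > 0\<close> by (simp add: mult_less_cancel_right)
  qed
  moreover have "q ` ?K \<subseteq> P" using q by auto
  ultimately show ?thesis using card_inj_on_le \<open>finite P\<close> by blast
qed

text \<open>Steps meeting a jump of \<open>F\<close> cost \<open>O(h)\<close> each and there are at most \<open>card P\<close> of them;
  all other steps cost \<open>O(h\<^sup>2)\<close> and are propagated with the factor \<open>1 + h L\<close>.\<close>
lemma scheme_global_error:
  fixes F :: "real \<Rightarrow> real ^ 'n \<Rightarrow> real ^ 'n" and S :: "nat \<Rightarrow> real ^ 'n \<Rightarrow> real ^ 'n"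
  assumes "\<tau> > 0" "n > 0" and h: "h = \<tau> / real n"
    and sol: "is_solution \<tau> F x0 x"
    and bound: "\<And>s y. s \<in> {0..\<tau>} \<Longrightarrow> norm (F s y) \<le> B"
    and lip: "\<And>s y z. s \<in> {0..\<tau>} \<Longrightarrow> norm (F s y - F s z) \<le> L * norm (y - z)" and "L \<ge> 0"
    and "finite P" and F_const: "constant_off \<tau> P F"
    and S_Euler: "\<And>k y. k < n \<Longrightarrow> norm (S k y - (y + h *\<^sub>R F ((real k + 1/2) * h) y)) \<le> C * h\<^sup>2"
    and "C \<ge> 0"
    and S_move: "\<And>k y. k < n \<Longrightarrow> norm (S k y - y) \<le> B * h"
  shows "norm (x \<tau> - fold S [0..<n] x0) \<le> exp (L * \<tau>) * h * (\<tau> * (L * B + C) + 2 * B * card P)"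
proof -
  have h0: "h > 0" and nh: "real n * h = \<tau>" using assms(1,2) by (simp_all add: h)
  have "norm (F 0 x0) \<le> B" using bound assms(1) by simp
  then have B0: "0 \<le> B" by (rule order_trans[OF norm_ge_zero])
  define jump where "jump k \<longleftrightarrow> P \<inter> {real k * h<..<real (Suc k) * h} \<noteq> {}" for k
  define d where "d k = h\<^sup>2 * (L * B + C) + (if jump k then 2 * B * h else 0)" for k
  define e where "e k = norm (x (real k * h) - fold S [0..<k] x0)" for k
  have d0: "d k \<ge> 0" for k using B0 h0 \<open>L \<ge> 0\<close> \<open>C \<ge> 0\<close> by (simp add: d_def)
  have step: "e (Suc k) \<le> (1 + h * L) * e k + d k" if k: "k < n" for k
  proof -
    have "real (Suc k) * h \<le> real n * h" using k h0 by (intro mult_right_mono) auto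
    then have le: "real k * h + h \<le> \<tau>" using nh by (simp add: algebra_simps)
    have uk: "0 \<le> real k * h" using h0 by simp
    have Euler: "norm (S k y - (y + h *\<^sub>R F (real k * h + h / 2) y)) \<le> C * h\<^sup>2" for y
      using S_Euler[OF k, of y] by (simp add: algebra_simps)
    have "norm (x (real k * h + h) - S k (fold S [0..<k] x0))
        \<le> (1 + h * L) * norm (x (real k * h) - fold S [0..<k] x0) + h\<^sup>2 * (L * B + C)
          + (if P \<inter> {real k * h<..<real k * h + h} = {} then 0 else 2 * B * h)"
      by (rule one_step_error_constant_off[where S = "S k", OF sol _ _ \<open>L \<ge> 0\<close> F_const h0])
        (fact bound lip uk le Euler \<open>C \<ge> 0\<close> S_move[OF k])+
    then show ?thesis by (simp add: e_def d_def jump_def algebra_simps split: if_splits)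
  qed
  have "e 0 = 0" using sol by (simp add: e_def is_solution_def)
  then have "e n \<le> (1 + h * L) ^ n * (\<Sum>k<n. d k)"
    using step d0 h0 \<open>L \<ge> 0\<close> by (intro discrete_gronwall) simp_all
  also have "\<dots> \<le> exp (L * \<tau>) * (h * (\<tau> * (L * B + C) + 2 * B * card P))"
  proof (rule mult_mono)
    have "(1 + h * L) ^ n \<le> exp (h * L) ^ n"
      using h0 \<open>L \<ge> 0\<close> by (intro power_mono exp_ge_add_one_self) auto
    then show "(1 + h * L) ^ n \<le> exp (L * \<tau>)"
      by (simp add: nh[symmetric] exp_of_nat_mult[symmetric] algebra_simps)
    have "(\<Sum>k<n. d k) = real n * (h\<^sup>2 * (L * B + C)) + 2 * B * h * card {k \<in> {..<n}. jump k}"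
      by (simp add: d_def sum.distrib sum.If_cases Int_def)
    also have "\<dots> \<le> real n * (h\<^sup>2 * (L * B + C)) + 2 * B * h * card P"
      using card_cells_meeting_le[OF \<open>finite P\<close> h0, of n] B0 h0
      by (simp add: jump_def mult_left_mono)
    also have "\<dots> = h * (\<tau> * (L * B + C) + 2 * B * card P)"
      by (simp add: nh[symmetric] power2_eq_square algebra_simps)
    finally show "(\<Sum>k<n. d k) \<le> h * (\<tau> * (L * B + C) + 2 * B * card P)" .
  qed (use d0 in \<open>simp_all add: sum_nonneg\<close>)
  finally show ?thesis using nh by (simp add: e_def mult.assoc)
qed

section \<open>Splitting the tanh field into ridge steps\<close>

lemma norm_tanh_field_le:
  assumes "\<And>i. i \<in> {1..M} \<Longrightarrow> norm (a i t) \<le> Ba"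
  shows "norm (tanh_field M a w b t y) \<le> M * Ba"
proof -
  have "norm (tanh_field M a w b t y) \<le> (\<Sum>i = 1..M. Ba)"
    unfolding tanh_field_def
  proof (rule sum_norm_le)
    fix i
    assume i: "i \<in> {1..M}"
    have "\<bar>tanh (w i t \<bullet> y + b i t)\<bar> * norm (a i t) \<le> 1 * Ba"
      using abs_tanh_le_1 assms[OF i] by (intro mult_mono) auto
    then show "norm (tanh (w i t \<bullet> y + b i t) *\<^sub>R a i t) \<le> Ba" by simp
  qed
  then show ?thesis by simp
qed

lemma tanh_field_lipschitz:
  assumes Ba: "\<And>i. i \<in> {1..M} \<Longrightarrow> norm (a i t) \<le> Ba" and Bw: "\<And>i. i \<in> {1..M} \<Longrightarrow> norm (w i t) \<le> Bw"
  shows "norm (tanh_field M a w b t y - tanh_field M a w b t z) \<le> M * Ba * Bw * norm (y - z)"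
proof -
  have "tanh_field M a w b t y - tanh_field M a w b t z
      = (\<Sum>i = 1..M. (tanh (w i t \<bullet> y + b i t) - tanh (w i t \<bullet> z + b i t)) *\<^sub>R a i t)"
    unfolding tanh_field_def by (simp add: sum_subtractf[symmetric] scaleR_diff_left)
  also have "norm \<dots> \<le> (\<Sum>i = 1..M. Bw * norm (y - z) * Ba)"
  proof (rule sum_norm_le)
    fix i
    assume i: "i \<in> {1..M}"
    have "\<bar>tanh (w i t \<bullet> y + b i t) - tanh (w i t \<bullet> z + b i t)\<bar> \<le> \<bar>w i t \<bullet> (y - z)\<bar>"
      using abs_tanh_diff_le[of "w i t \<bullet> y + b i t" "w i t \<bullet> z + b i t"] by (simp add: inner_diff_right)
    also have "\<dots> \<le> Bw * norm (y - z)"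
      using Cauchy_Schwarz_ineq2[of "w i t" "y - z"] Bw[OF i] by (meson mult_right_mono norm_ge_zero order_trans)
    finally have "\<bar>tanh (w i t \<bullet> y + b i t) - tanh (w i t \<bullet> z + b i t)\<bar> * norm (a i t) \<le> Bw * norm (y - z) * Ba"
      using Ba[OF i] by (intro mult_mono) auto
    then show "norm ((tanh (w i t \<bullet> y + b i t) - tanh (w i t \<bullet> z + b i t)) *\<^sub>R a i t) \<le> Bw * norm (y - z) * Ba"
      by (simp only: norm_scaleR real_norm_def)
  qed
  finally show ?thesis by (simp add: algebra_simps)
qed

lemma constant_off_tanh_field:
  assumes "\<And>i. i \<in> {1..M} \<Longrightarrow> constant_off \<tau> P (a i) \<and> constant_off \<tau> P (w i) \<and> constant_off \<tau> P (b i)"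
  shows "constant_off \<tau> P (tanh_field M a w b)"
  unfolding constant_off_def
proof (intro allI impI ballI)
  fix u v s
  assume "0 \<le> u" "u < v" "v \<le> \<tau>" "P \<inter> {u<..<v} = {}" "s \<in> {u<..<v}"
  then have "a i s = a i ((u + v) / 2) \<and> w i s = w i ((u + v) / 2) \<and> b i s = b i ((u + v) / 2)"
    if "i \<in> {1..M}" for i
    using assms[OF that] unfolding constant_off_def by blast
  then show "tanh_field M a w b s = tanh_field M a w b ((u + v) / 2)"
    unfolding tanh_field_def by (intro ext sum.cong) auto
qed

definition tanh_splitting ::
  "nat \<Rightarrow> (nat \<Rightarrow> real \<Rightarrow> real ^ 'n) \<Rightarrow> (nat \<Rightarrow> real \<Rightarrow> real ^ 'n) \<Rightarrow> (nat \<Rightarrow> real \<Rightarrow> real)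
     \<Rightarrow> real \<Rightarrow> real \<Rightarrow> real ^ 'n \<Rightarrow> real ^ 'n" where
  "tanh_splitting M a w b h t = fold (\<lambda>i. tanh_step (a i t) (w i t) (b i t) h) [1..<Suc M]"

lemma tanh_splitting_Suc:
  "tanh_splitting (Suc M) a w b h t y
    = tanh_step (a (Suc M) t) (w (Suc M) t) (b (Suc M) t) h (tanh_splitting M a w b h t y)"
  by (simp add: tanh_splitting_def)

lemma norm_tanh_splitting_diff_le:
  assumes "h \<ge> 0" and Ba: "\<And>i. i \<in> {1..M} \<Longrightarrow> norm (a i t) \<le> Ba"
  shows "norm (tanh_splitting M a w b h t y - y) \<le> M * h * Ba"
  using Ba
proof (induction M)
  case 0
  then show ?case by (simp add: tanh_splitting_def)
next
  case (Suc M)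
  let ?Z = "tanh_splitting M a w b h t y"
  have "\<bar>tanh (w (Suc M) t \<bullet> ?Z + b (Suc M) t)\<bar> * norm (a (Suc M) t) \<le> 1 * Ba"
    using Suc.prems[of "Suc M"] abs_tanh_le_1 by (intro mult_mono) auto
  then have "norm ((h * tanh (w (Suc M) t \<bullet> ?Z + b (Suc M) t)) *\<^sub>R a (Suc M) t) \<le> h * Ba"
    using \<open>h \<ge> 0\<close> by (simp add: abs_mult mult.assoc mult_left_mono)
  moreover have "norm (?Z - y) \<le> M * h * Ba" using Suc by simp
  ultimately show ?case
    using norm_triangle_le[of "?Z - y" "(h * tanh (w (Suc M) t \<bullet> ?Z + b (Suc M) t)) *\<^sub>R a (Suc M) t"]
    by (simp add: tanh_splitting_Suc tanh_step_def algebra_simps)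
qed

text \<open>Composing the ridge steps instead of adding their increments costs \<open>O(h\<^sup>2)\<close>, since
  each step is evaluated at a point that has moved by \<open>O(h)\<close>.\<close>
lemma tanh_splitting_Euler_error:
  assumes "h \<ge> 0" and Ba: "\<And>i. i \<in> {1..M} \<Longrightarrow> norm (a i t) \<le> Ba"
    and Bw: "\<And>i. i \<in> {1..M} \<Longrightarrow> norm (w i t) \<le> Bw"
  shows "norm (tanh_splitting M a w b h t y - (y + h *\<^sub>R tanh_field M a w b t y)) \<le> M\<^sup>2 * h\<^sup>2 * Ba\<^sup>2 * Bw"
  using Ba Bw
proof (induction M)
  case 0
  then show ?case by (simp add: tanh_splitting_def tanh_field_def)
next
  case (Suc M)
  let ?Z = "tanh_splitting M a w b h t y"
  let ?c = "a (Suc M) t" and ?w = "w (Suc M) t" and ?\<beta> = "b (Suc M) t"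
  have c: "norm ?c \<le> Ba" "norm ?w \<le> Bw" using Suc.prems by simp_all
  then have "0 \<le> Ba" "0 \<le> Bw" by (auto intro: order_trans[OF norm_ge_zero])
  have IH: "norm (?Z - (y + h *\<^sub>R tanh_field M a w b t y)) \<le> M\<^sup>2 * h\<^sup>2 * Ba\<^sup>2 * Bw"
    using Suc by simp
  have "\<bar>tanh (?w \<bullet> ?Z + ?\<beta>) - tanh (?w \<bullet> y + ?\<beta>)\<bar> \<le> norm ?w * norm (?Z - y)"
    using abs_tanh_diff_le[of "?w \<bullet> ?Z + ?\<beta>" "?w \<bullet> y + ?\<beta>"] Cauchy_Schwarz_ineq2[of ?w "?Z - y"]
    by (simp add: inner_diff_right)
  also have "\<dots> \<le> Bw * (M * h * Ba)"
    using c norm_tanh_splitting_diff_le[OF \<open>h \<ge> 0\<close>, of M a t Ba w b y] Suc.prems \<open>0 \<le> Bw\<close>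
    by (intro mult_mono) auto
  finally have step: "norm ((h * (tanh (?w \<bullet> ?Z + ?\<beta>) - tanh (?w \<bullet> y + ?\<beta>))) *\<^sub>R ?c) \<le> h * (Bw * (M * h * Ba)) * Ba"
    using c \<open>h \<ge> 0\<close> by (simp add: abs_mult mult_mono mult_left_mono)
  have "tanh_splitting (Suc M) a w b h t y - (y + h *\<^sub>R tanh_field (Suc M) a w b t y)
      = (?Z - (y + h *\<^sub>R tanh_field M a w b t y)) + (h * (tanh (?w \<bullet> ?Z + ?\<beta>) - tanh (?w \<bullet> y + ?\<beta>))) *\<^sub>R ?c"
    by (simp add: tanh_splitting_Suc tanh_step_def tanh_field_def algebra_simps scaleR_add_right)
  then have "norm (tanh_splitting (Suc M) a w b h t y - (y + h *\<^sub>R tanh_field (Suc M) a w b t y))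
      \<le> M\<^sup>2 * h\<^sup>2 * Ba\<^sup>2 * Bw + h * (Bw * (M * h * Ba)) * Ba"
    using IH step norm_triangle_le by (metis add_mono norm_triangle_ineq)
  also have "M\<^sup>2 * h\<^sup>2 * Ba\<^sup>2 * Bw + h * (Bw * (M * h * Ba)) * Ba \<le> (Suc M)\<^sup>2 * h\<^sup>2 * Ba\<^sup>2 * Bw"
  proof -
    have "0 \<le> Ba\<^sup>2 * Bw * h\<^sup>2 * (real M + 1)" using \<open>0 \<le> Bw\<close> by simp
    then show ?thesis by (simp add: power2_eq_square algebra_simps)
  qed
  finally show ?case by simp
qed

lemma approximable_tanh_splitting:
  assumes "\<alpha> > 0" "\<alpha> \<noteq> 1" "h \<ge> 0"
    and small: "\<And>i. i \<in> {1..M} \<Longrightarrow> \<bar>w i t \<bullet> a i t\<bar> * h \<le> leaky_margin \<alpha>"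
  shows "tanh_splitting M a w b h t \<in> approximable \<alpha>"
  unfolding tanh_splitting_def
proof (rule approximable_fold)
  fix i
  assume "i \<in> set [1..<Suc M]"
  then have "i \<in> {1..M}" by auto
  then have "\<bar>w i t \<bullet> a i t\<bar> * h \<le> leaky_margin \<alpha>" by (rule small)
  then show "tanh_step (a i t) (w i t) (b i t) h \<in> approximable \<alpha>"
    by (rule approximable_tanh_step[OF assms(1-3)])
qed

lemma tanh_splitting_scheme_error:
  fixes \<tau> h Ba Bw :: real
  assumes "\<tau> > 0" "n > 0" and h: "h = \<tau> / real n"
    and sol: "is_solution \<tau> (tanh_field M a w b) x0 x"
    and "finite P"
    and const: "\<And>i. i \<in> {1..M} \<Longrightarrow> constant_off \<tau> P (a i) \<and> constant_off \<tau> P (w i) \<and> constant_off \<tau> P (b i)"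
    and Ba: "\<And>i s. i \<in> {1..M} \<Longrightarrow> s \<in> {0..\<tau>} \<Longrightarrow> norm (a i s) \<le> Ba" and "Ba \<ge> 0"
    and Bw: "\<And>i s. i \<in> {1..M} \<Longrightarrow> s \<in> {0..\<tau>} \<Longrightarrow> norm (w i s) \<le> Bw" and "Bw \<ge> 0"
  shows "norm (x \<tau> - fold (\<lambda>k. tanh_splitting M a w b h ((real k + 1/2) * h)) [0..<n] x0)
    \<le> h * (2 * real M * Ba * exp (M * Ba * Bw * \<tau>) * (\<tau> * M * Ba * Bw + card P))"
proof -
  have h0: "h > 0" and nh: "real n * h = \<tau>" using assms(1,2) by (simp_all add: h)
  have mid: "(real k + 1/2) * h \<in> {0..\<tau>}" if "k < n" for k
  proof -
    have "(real k + 1/2) * h \<le> real n * h" using that h0 by (intro mult_right_mono) auto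
    then show ?thesis using h0 nh by simp
  qed
  have "norm (x \<tau> - fold (\<lambda>k. tanh_splitting M a w b h ((real k + 1/2) * h)) [0..<n] x0)
    \<le> exp ((M * Ba * Bw) * \<tau>) * h * (\<tau> * ((M * Ba * Bw) * (M * Ba) + M\<^sup>2 * Ba\<^sup>2 * Bw) + 2 * (M * Ba) * card P)"
  proof (rule scheme_global_error[OF assms(1-4)])
    show "norm (tanh_field M a w b s y) \<le> M * Ba" if "s \<in> {0..\<tau>}" for s y
      using Ba that by (intro norm_tanh_field_le) auto
    show "norm (tanh_field M a w b s y - tanh_field M a w b s z) \<le> M * Ba * Bw * norm (y - z)"
      if "s \<in> {0..\<tau>}" for s y z
      using Ba Bw that by (intro tanh_field_lipschitz) auto
    show "constant_off \<tau> P (tanh_field M a w b)" using const by (rule constant_off_tanh_field)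
    show "norm (tanh_splitting M a w b h ((real k + 1/2) * h) y
        - (y + h *\<^sub>R tanh_field M a w b ((real k + 1/2) * h) y)) \<le> M\<^sup>2 * Ba\<^sup>2 * Bw * h\<^sup>2"
      if "k < n" for k y
      using tanh_splitting_Euler_error[of h M a "(real k + 1/2) * h" Ba w Bw b y] h0 Ba Bw mid[OF that]
      by (simp add: algebra_simps)
    show "norm (tanh_splitting M a w b h ((real k + 1/2) * h) y - y) \<le> M * Ba * h" if "k < n" for k y
      using norm_tanh_splitting_diff_le[of h M a "(real k + 1/2) * h" Ba w b y] h0 Ba mid[OF that]
      by (simp add: algebra_simps)
  qed (use \<open>finite P\<close> \<open>Ba \<ge> 0\<close> \<open>Bw \<ge> 0\<close> in simp_all)
  also have "\<dots> = h * (2 * real M * Ba * exp (M * Ba * Bw * \<tau>) * (\<tau> * M * Ba * Bw + card P))"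
    by (simp add: power2_eq_square algebra_simps)
  finally show ?thesis .
qed

lemma tanh_coefficients_common_partition:
  fixes a w :: "nat \<Rightarrow> real \<Rightarrow> real ^ 'n" and b :: "nat \<Rightarrow> real \<Rightarrow> real"
  assumes pc: "\<forall>i \<in> {1..M}. piecewise_constant_on \<tau> (a i) \<and> piecewise_constant_on \<tau> (w i)
                        \<and> piecewise_constant_on \<tau> (b i)"
  obtains P Ba Bw where "finite P" "Ba \<ge> 0" "Bw \<ge> 0"
    "\<And>i. i \<in> {1..M} \<Longrightarrow> constant_off \<tau> P (a i) \<and> constant_off \<tau> P (w i) \<and> constant_off \<tau> P (b i)"
    "\<And>i s. i \<in> {1..M} \<Longrightarrow> s \<in> {0..\<tau>} \<Longrightarrow> norm (a i s) \<le> Ba"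
    "\<And>i s. i \<in> {1..M} \<Longrightarrow> s \<in> {0..\<tau>} \<Longrightarrow> norm (w i s) \<le> Bw"
proof -
  obtain Pa Ba where Pa: "finite Pa" "\<And>i. i \<in> {1..M} \<Longrightarrow> constant_off \<tau> Pa (a i)"
    and Ba: "\<And>i s. i \<in> {1..M} \<Longrightarrow> s \<in> {0..\<tau>} \<Longrightarrow> norm (a i s) \<le> Ba"
    by (rule piecewise_constant_family[of "{1..M}" \<tau> a]) (use pc in auto)
  obtain Pw Bw where Pw: "finite Pw" "\<And>i. i \<in> {1..M} \<Longrightarrow> constant_off \<tau> Pw (w i)"
    and Bw: "\<And>i s. i \<in> {1..M} \<Longrightarrow> s \<in> {0..\<tau>} \<Longrightarrow> norm (w i s) \<le> Bw"
    by (rule piecewise_constant_family[of "{1..M}" \<tau> w]) (use pc in auto)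
  obtain Pb where Pb: "finite Pb" "\<And>i. i \<in> {1..M} \<Longrightarrow> constant_off \<tau> Pb (b i)"
    by (rule piecewise_constant_family[of "{1..M}" \<tau> b]) (use pc in auto)
  show thesis
  proof (rule that[of "Pa \<union> Pw \<union> Pb" "max Ba 0" "max Bw 0"])
    show "finite (Pa \<union> Pw \<union> Pb)" using Pa Pw Pb by simp
    show "constant_off \<tau> (Pa \<union> Pw \<union> Pb) (a i) \<and> constant_off \<tau> (Pa \<union> Pw \<union> Pb) (w i)
        \<and> constant_off \<tau> (Pa \<union> Pw \<union> Pb) (b i)" if "i \<in> {1..M}" for i
      using Pa(2)[OF that] Pw(2)[OF that] Pb(2)[OF that] by (auto intro: constant_off_subset)
    show "norm (a i s) \<le> max Ba 0" "norm (w i s) \<le> max Bw 0" if "i \<in> {1..M}" "s \<in> {0..\<tau>}" for i s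
      using Ba[OF that] Bw[OF that] by auto
  qed simp_all
qed

lemma approximable_tanh_scheme:
  assumes \<alpha>: "\<alpha> > 0" "\<alpha> \<noteq> 1" and h: "h > 0" "real n * h = \<tau>"
    and Ba: "\<And>i s. i \<in> {1..M} \<Longrightarrow> s \<in> {0..\<tau>} \<Longrightarrow> norm (a i s) \<le> Ba"
    and Bw: "\<And>i s. i \<in> {1..M} \<Longrightarrow> s \<in> {0..\<tau>} \<Longrightarrow> norm (w i s) \<le> Bw" and "Bw \<ge> 0"
    and small: "Bw * Ba * h \<le> leaky_margin \<alpha>"
  shows "fold (\<lambda>k. tanh_splitting M a w b h ((real k + 1/2) * h)) [0..<n] \<in> approximable \<alpha>"
proof (rule approximable_fold, rule approximable_tanh_splitting[OF \<alpha>])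
  fix k i
  assume "k \<in> set [0..<n]" "i \<in> {1..M}"
  then have "(real k + 1/2) * h \<le> real n * h" using h by (intro mult_right_mono) auto
  moreover have "0 \<le> (real k + 1/2) * h" using h by simp
  ultimately have "(real k + 1/2) * h \<in> {0..\<tau>}" using h by simp
  then have "norm (w i ((real k + 1/2) * h)) * norm (a i ((real k + 1/2) * h)) \<le> Bw * Ba"
    using Ba Bw \<open>i \<in> {1..M}\<close> \<open>Bw \<ge> 0\<close> by (intro mult_mono) auto
  then have "\<bar>w i ((real k + 1/2) * h) \<bullet> a i ((real k + 1/2) * h)\<bar> * h \<le> Bw * Ba * h"
    using Cauchy_Schwarz_ineq2 h by (intro mult_right_mono) (auto intro: order_trans)
  then show "\<bar>w i ((real k + 1/2) * h) \<bullet> a i ((real k + 1/2) * h)\<bar> * h \<le> leaky_margin \<alpha>"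
    using small by linarith
qed (use h in simp)

text \<open>The error bound is uniform in the initial point, so no compact set is needed here.\<close>
lemma tanh_flow_approximable:
  assumes \<alpha>: "\<alpha> > 0" "\<alpha> \<noteq> 1" and "\<tau> > 0"
    and pc: "\<forall>i \<in> {1..M}. piecewise_constant_on \<tau> (a i) \<and> piecewise_constant_on \<tau> (w i)
                        \<and> piecewise_constant_on \<tau> (b i)"
    and flow: "is_flow_map \<tau> (tanh_field M a w b) \<phi>" and "\<epsilon> > 0"
  shows "\<exists>Y\<in>approximable \<alpha>. \<forall>x0. norm (\<phi> x0 - Y x0) < \<epsilon>"
proof -
  obtain P Ba Bw where P: "finite P" and "Ba \<ge> 0" "Bw \<ge> 0"
    and const: "\<And>i. i \<in> {1..M} \<Longrightarrow> constant_off \<tau> P (a i) \<and> constant_off \<tau> P (w i) \<and> constant_off \<tau> P (b i)"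
    and Ba: "\<And>i s. i \<in> {1..M} \<Longrightarrow> s \<in> {0..\<tau>} \<Longrightarrow> norm (a i s) \<le> Ba"
    and Bw: "\<And>i s. i \<in> {1..M} \<Longrightarrow> s \<in> {0..\<tau>} \<Longrightarrow> norm (w i s) \<le> Bw"
    using tanh_coefficients_common_partition[OF pc] by metis
  define K where "K = 2 * real M * Ba * exp (M * Ba * Bw * \<tau>) * (\<tau> * M * Ba * Bw + card P)"
  obtain n :: nat where n: "max (\<tau> * K / \<epsilon>) (\<tau> * Bw * Ba / leaky_margin \<alpha>) < n"
    using reals_Archimedean2 by blast
  moreover have "0 \<le> \<tau> * K / \<epsilon>" using \<open>\<tau> > 0\<close> \<open>\<epsilon> > 0\<close> \<open>Ba \<ge> 0\<close> \<open>Bw \<ge> 0\<close> by (simp add: K_def)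
  ultimately have "n > 0" by (cases n) auto
  define h where "h = \<tau> / real n"
  have h: "h > 0" "real n * h = \<tau>" using \<open>\<tau> > 0\<close> \<open>n > 0\<close> by (simp_all add: h_def)
  have "h * K < \<epsilon>" using n \<open>n > 0\<close> \<open>\<epsilon> > 0\<close> by (simp add: h_def field_simps)
  have small: "Bw * Ba * h \<le> leaky_margin \<alpha>"
    using n \<open>n > 0\<close> leaky_margin_pos[OF \<alpha>] by (simp add: h_def field_simps)
  have "fold (\<lambda>k. tanh_splitting M a w b h ((real k + 1/2) * h)) [0..<n] \<in> approximable \<alpha>"
    by (rule approximable_tanh_scheme[OF \<alpha> h _ _ \<open>Bw \<ge> 0\<close> small]) (fact Ba Bw)+
  moreover have "norm (\<phi> x0 - fold (\<lambda>k. tanh_splitting M a w b h ((real k + 1/2) * h)) [0..<n] x0) < \<epsilon>"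
    for x0
  proof -
    obtain x where sol: "is_solution \<tau> (tanh_field M a w b) x0 x" and \<phi>: "\<phi> x0 = x \<tau>"
      using flow unfolding is_flow_map_def by blast
    have "norm (x \<tau> - fold (\<lambda>k. tanh_splitting M a w b h ((real k + 1/2) * h)) [0..<n] x0) \<le> h * K"
      unfolding K_def
      by (rule tanh_splitting_scheme_error[OF \<open>\<tau> > 0\<close> \<open>n > 0\<close> h_def sol P])
        (fact const Ba Bw \<open>Ba \<ge> 0\<close> \<open>Bw \<ge> 0\<close>)+
    then show ?thesis using \<phi> \<open>h * K < \<epsilon>\<close> by simp
  qed
  ultimately show ?thesis by blast
qed

theorem lemma3p2:
  fixes \<alpha> \<tau> \<epsilon> :: real and M :: nat
    and a w :: "nat \<Rightarrow> real \<Rightarrow> real ^ 'n" and b :: "nat \<Rightarrow> real \<Rightarrow> real"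
    and \<phi> :: "real ^ 'n \<Rightarrow> real ^ 'n" and \<Omega> :: "(real ^ 'n) set"
  assumes "\<alpha> > 0" and "\<alpha> \<noteq> 1"
    and "\<tau> > 0" and "M \<ge> 1"
    and "\<forall>i \<in> {1..M}. piecewise_constant_on \<tau> (a i) \<and> piecewise_constant_on \<tau> (w i)
                        \<and> piecewise_constant_on \<tau> (b i)"
    and "is_flow_map \<tau> (tanh_field M a w b) \<phi>"
    and "compact \<Omega>" and "\<epsilon> > 0"
  shows "\<exists>L \<ge> 1. \<exists>\<psi> \<in> leaky_nets \<alpha> L. \<forall>x0 \<in> \<Omega>. norm (\<phi> x0 - \<psi> x0) < \<epsilon>"
proof -
  obtain Y where Y: "Y \<in> approximable \<alpha>" "\<And>x0. norm (\<phi> x0 - Y x0) < \<epsilon> / 2"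
    using tanh_flow_approximable[OF assms(1-3,5,6), of "\<epsilon> / 2"] \<open>\<epsilon> > 0\<close> by auto
  obtain G where G: "G \<in> realizable \<alpha>" "\<And>x0. x0 \<in> \<Omega> \<Longrightarrow> norm (Y x0 - G x0) < \<epsilon> / 2"
    using approximableD[OF Y(1) \<open>compact \<Omega>\<close>, of "\<epsilon> / 2"] \<open>\<epsilon> > 0\<close> by auto
  obtain L \<psi> where "L \<ge> 1" "\<psi> \<in> leaky_nets \<alpha> L" and \<psi>: "\<And>x0. x0 \<in> \<Omega> \<Longrightarrow> \<psi> x0 = G x0"
    using realizable_ex_net[OF G(1) \<open>compact \<Omega>\<close>] by blast
  moreover have "norm (\<phi> x0 - \<psi> x0) < \<epsilon>" if "x0 \<in> \<Omega>" for x0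
    using norm_diff_triangle_less[OF Y(2) G(2)[OF that]] \<psi>[OF that] by simp
  ultimately show ?thesis by blast
qed

end
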